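(* In the setting of the context, fix $\beta>0$ and let $\Gamma_\beta:=\overline{W_{\overline{\mathbb{R}}\times\{\beta\}}(T)\setminus i\mathbb{R}}$. Then there is a unique maximal horizontal strip with respect to $\Gamma_\beta$ if and only if $d>\min(2\sqrt{\beta},d_2)$. If $d\le\min(2\sqrt{\beta},d_2)$ there is no such strip.
   Context: Let $c\ge0$, $d>0$, $\delta_\pm:=\pm\sqrt{c-d^2/4}-id/2$ (principal square root). For real $\alpha,\beta$ let $p_{(\alpha,\beta)}(\omega):=(\alpha-\omega^2)(c-id\omega-\omega^2)-\beta\omega^2$ with roots $r_1,\dots,r_4$ labelled continuously in $(\alpha,\beta)$ and extended by limits to $\alpha=\pm\infty$ (roots $\delta_\pm$ and $\infty$ twice), values in the Riemann sphere $\overline{\mathbb{C}}$. $W_{\overline{\mathbb{R}}\times\{\beta\}}(T):=\bigcup_{n=1}^4\{r_n(\alpha,\beta):\alpha\in\mathbb{R}\cup\{\pm\infty\}\}$, closures in $\overline{\mathbb{C}}$. Let $q_\beta(\mu):=\mu^4+2d\mu^3+(2c+d^2)\mu^2+d(\beta/2+2c)\mu+c(\beta+c)$ and $\Delta_{q_\beta}$ its discriminant as a function of $d$. Define $d_2$ by: $d_2=\infty$ if $\beta<4c$; if $\beta\ge4c>0$, $d_2$ is the (unique) solution of $\Delta_{q_\beta}=0$ in $(2\sqrt{c},2\sqrt{\beta}]$; if $c=0$, $d_2=\sqrt{27\beta/8}$. A horizontal strip is an open set $\mathcal{S}=\{\omega\in\overline{\mathbb{C}}:s_0<\omega_\Im<s_1\}$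 with real $s_0<s_1$; for a closed $\Gamma\subset\overline{\mathbb{C}}$ it is maximal with respect to $\Gamma$ if $\mathcal{S}\subset\overline{\mathbb{C}}\setminus\Gamma$, $\Gamma\cap(\mathbb{R}+is_0)\neq\emptyset$ and $\Gamma\cap(\mathbb{R}+is_1)\neq\emptyset$. *)

theory Defs
  imports "HOL-Analysis.Analysis"
begin

definition pab :: "real \<Rightarrow> real \<Rightarrow> real \<Rightarrow> real \<Rightarrow> complex \<Rightarrow> complex" where
  "pab c d \<alpha> \<beta> \<omega> =
     (of_real \<alpha> - \<omega>^2) * (of_real c - \<i> * of_real d * \<omega> - \<omega>^2) - of_real \<beta> * \<omega>^2"

definition delta_p :: "real \<Rightarrow> real \<Rightarrow> complex" where
  "delta_p c d = csqrt (of_real (c - d^2/4)) - \<i> * of_real (d/2)"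
definition delta_m :: "real \<Rightarrow> real \<Rightarrow> complex" where
  "delta_m c d = - csqrt (of_real (c - d^2/4)) - \<i> * of_real (d/2)"

text \<open>Finite part of W_{(R-bar) x {beta}}(T): union over all alpha in R of the four roots
  r_1..r_4 of p_(alpha,beta), together with the finite limit roots delta_+, delta_- at
  alpha = +-infinity (the remaining limits are the point infinity, not in C).\<close>
definition W_beta :: "real \<Rightarrow> real \<Rightarrow> real \<Rightarrow> complex set" where
  "W_beta c d \<beta> = {\<omega>. \<exists>\<alpha>::real. pab c d \<alpha> \<beta> \<omega> = 0} \<union> {delta_p c d, delta_m c d}"

text \<open>Finite part of Gamma_beta = closure of (W \ iR). Closure in the Riemann sphere
  intersected with C equals the closure in C of the finite part.\<close>
definition Gamma_beta :: "real \<Rightarrow> real \<Rightarrow> real \<Rightarrow> complex set" where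
  "Gamma_beta c d \<beta> = closure {\<omega> \<in> W_beta c d \<beta>. Re \<omega> \<noteq> 0}"

definition disc4 :: "real \<Rightarrow> real \<Rightarrow> real \<Rightarrow> real \<Rightarrow> real \<Rightarrow> real" where
  "disc4 a b c d e =
     256*a^3*e^3 - 192*a^2*b*d*e^2 - 128*a^2*c^2*e^2 + 144*a^2*c*d^2*e - 27*a^2*d^4
   + 144*a*b^2*c*e^2 - 6*a*b^2*d^2*e - 80*a*b*c^2*d*e + 18*a*b*c*d^3 + 16*a*c^4*e
   - 4*a*c^3*d^2 - 27*b^4*e^2 + 18*b^3*c*d*e - 4*b^3*d^3 - 4*b^2*c^3*e + b^2*c^2*d^2"

definition disc_q :: "real \<Rightarrow> real \<Rightarrow> real \<Rightarrow> real" where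
  "disc_q c \<beta> d = disc4 1 (2*d) (2*c + d^2) (d*(\<beta>/2 + 2*c)) (c*(\<beta> + c))"

definition d2 :: "real \<Rightarrow> real \<Rightarrow> ereal" where
  "d2 c \<beta> =
    (if c = 0 then ereal (sqrt (27*\<beta>/8))
     else if \<beta> < 4*c then \<infinity>
     else ereal (THE x. 2 * sqrt c < (x::real) \<and> x \<le> 2 * sqrt \<beta> \<and> disc_q c \<beta> x = 0))"

definition maximal_strip :: "complex set \<Rightarrow> real \<Rightarrow> real \<Rightarrow> bool" where
  "maximal_strip \<Gamma> s0 s1 \<longleftrightarrow> s0 < s1 \<and>
     {\<omega>. s0 < Im \<omega> \<and> Im \<omega> < s1} \<inter> \<Gamma> = {} \<and>
     (\<exists>\<omega>\<in>\<Gamma>. Im \<omega> = s0) \<and> (\<exists>\<omega>\<in>\<Gamma>. Im \<omega> = s1)"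

end

theory Submission
  imports Defs
begin

text \<open>
  Put \<open>h = d/2\<close> and \<open>\<omega> = x - i t\<close>. For \<open>x \<noteq> 0\<close>, eliminating \<open>\<alpha>\<close> from
  \<open>p\<^sub>(\<^sub>\<alpha>\<^sub>,\<^sub>\<beta>\<^sub>)(\<omega>) = 0\<close> shows that \<open>\<omega>\<close> lies on \<open>W\<close> iff a real polynomial
  equation \<open>F(x\<^sup>2, t) = 0\<close> holds. Hence the imaginary parts of \<open>\<Gamma>\<^sub>\<beta>\<close> are, up to sign, the
  closure \<open>D\<close> of the set of depths \<open>t > 0\<close> at which \<open>F(s, t) = 0\<close> has a root \<open>s > 0\<close>, and
  the maximal strips are exactly the gaps of \<open>D\<close>.

  On an initial interval, a depth \<open>t\<close> belongs to \<open>D\<close> essentially iff a profile function is at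
  most \<open>\<beta>\<close>: the parabola \<open>4t(h - t)\<close> below \<open>\<surd>c\<close>, and
  \<open>\<phi>(t) = (t\<^sup>2 - 2ht + c)\<^sup>2/(ht - c)\<close> above it; beyond that interval the depth set is
  closed downwards. The profile rises to a single peak and then falls, so \<open>D\<close> has exactly one gap
  if \<open>\<beta>\<close> is below the peak value and none otherwise. The peak value is \<open>h\<^sup>2\<close>, except when
  \<open>4c \<le> h\<^sup>2\<close>, where it is the local maximum of \<open>\<phi>\<close>. That maximum increases strictly with
  \<open>h\<close>, and it equals \<open>\<beta>\<close> exactly when \<open>q\<^sub>\<beta>\<close> has a double root, which identifies the
  threshold with \<open>d\<^sub>2\<close>.
\<close>

lemma quadratic_root_ge:
  fixes a b c x0 :: real
  assumes a: "a > 0" and f: "a*x0^2 + b*x0 + c \<le> 0"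
  shows "\<exists>x\<ge>x0. a*x^2 + b*x + c = 0"
proof -
  define D where "D = b^2 - 4*a*c"
  have "4*a*(a*x0^2 + b*x0 + c) = (2*a*x0+b)^2 - D" unfolding D_def by algebra
  moreover have "4*a*(a*x0^2 + b*x0 + c) \<le> 0" using a f by (simp add: mult_nonneg_nonpos)
  ultimately have D: "(2*a*x0+b)^2 \<le> D" by linarith
  hence D0: "D \<ge> 0" by (smt (verit) zero_le_power2)
  have "\<bar>2*a*x0+b\<bar> \<le> sqrt D" using D real_sqrt_le_mono real_sqrt_abs by metis
  hence s: "2*a*x0+b \<le> sqrt D" by linarith
  define x where "x = (-b + sqrt D)/(2*a)"
  have "x0 \<le> x" unfolding x_def using a s by (simp add: field_simps)
  moreover have "a*x^2 + b*x + c = 0"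
  proof -
    have "4*a*(a*x^2 + b*x + c) = (2*a*x+b)^2 - D" unfolding D_def by algebra
    also have "2*a*x + b = sqrt D" unfolding x_def using a by (simp add: field_simps)
    finally show ?thesis using a D0 by simp
  qed
  ultimately show ?thesis by blast
qed

lemma quadratic_bound:
  fixes s a b :: real
  assumes "s \<ge> 0" "a \<ge> 0" "b \<ge> 0" "s^2 \<le> a * s + b" shows "s \<le> a + b + 1"
proof (rule ccontr)
  assume "\<not> s \<le> a + b + 1"
  then have s: "s > a + b + 1" by simp
  have "s * s > (a + b + 1) * s" using s assms by (intro mult_strict_right_mono) auto
  moreover have "b * s \<ge> b * 1" using s assms by (intro mult_left_mono) auto
  ultimately have "s * s > a * s + b" using assms(1) by (simp add: algebra_simps)
  then show False using assms(4) by (simp add: power2_eq_square)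
qed

lemma sqrt_less_iff: "0 < d \<Longrightarrow> sqrt x < d \<longleftrightarrow> x < d^2"
  using real_sqrt_less_iff[of x "d^2"] by simp

lemma strict_mono_on_Un:
  fixes f :: "'a::linorder \<Rightarrow> 'b::order"
  assumes A: "strict_mono_on A f" and B: "strict_mono_on B f"
    and AB: "\<And>x y. x \<in> A \<Longrightarrow> y \<in> B \<Longrightarrow> x < y \<and> f x < f y"
  shows "strict_mono_on (A \<union> B) f"
proof (rule monotone_onI)
  fix x y assume "x \<in> A \<union> B" "y \<in> A \<union> B" "x < y"
  then consider "x \<in> A" "y \<in> A" | "x \<in> B" "y \<in> B" | "x \<in> A" "y \<in> B" | "x \<in> B" "y \<in> A"
    by blast
  then show "f x < f y"
    by cases (use A B AB[of x y] AB[of y x] \<open>x < y\<close> in \<open>auto dest: monotone_onD\<close>)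
qed

lemma strict_antimono_on_Un:
  fixes f :: "'a::linorder \<Rightarrow> 'b::order"
  assumes A: "strict_antimono_on A f" and B: "strict_antimono_on B f"
    and AB: "\<And>x y. x \<in> A \<Longrightarrow> y \<in> B \<Longrightarrow> x < y \<and> f y < f x"
  shows "strict_antimono_on (A \<union> B) f"
proof (rule monotone_onI)
  fix x y assume "x \<in> A \<union> B" "y \<in> A \<union> B" "x < y"
  then consider "x \<in> A" "y \<in> A" | "x \<in> B" "y \<in> B" | "x \<in> A" "y \<in> B" | "x \<in> B" "y \<in> A"
    by blast
  then show "f y < f x"
    by cases (use A B AB[of x y] AB[of y x] \<open>x < y\<close> in \<open>auto dest: monotone_onD\<close>)
qed

lemma monotone_on_eqI:
  assumes "monotone_on A ord1 ord2 f" "\<And>x. x \<in> A \<Longrightarrow> g x = f x"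
  shows "monotone_on A ord1 ord2 g"
  using assms unfolding monotone_on_def by simp

lemma ex1_iff_involution:
  assumes PQ: "\<And>x. P x \<longleftrightarrow> Q (f x)" and f: "\<And>x. f (f x) = x"
  shows "(\<exists>!x. P x) \<longleftrightarrow> (\<exists>!y. Q y)"
proof
  assume "\<exists>!x. P x"
  then obtain x where x: "P x" "\<And>x'. P x' \<Longrightarrow> x' = x" by blast
  show "\<exists>!y. Q y"
  proof (rule ex1I[of _ "f x"])
    fix y assume "Q y"
    then have "P (f y)" using PQ f by simp
    then show "y = f x" using x(2) f by metis
  qed (use PQ x in blast)
next
  assume "\<exists>!y. Q y"
  then obtain y where y: "Q y" "\<And>y'. Q y' \<Longrightarrow> y' = y" by blast
  show "\<exists>!x. P x"
  proof (rule ex1I[of _ "f y"])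
    show "P (f y)" using PQ f y(1) by simp
    fix x assume "P x"
    then show "x = f y" using PQ y(2) f by metis
  qed
qed

lemma affine_real_root:
  fixes Q R :: complex
  assumes Q: "Q \<noteq> 0" and par: "Re R * Im Q = Im R * Re Q"
  shows "\<exists>\<alpha>::real. of_real \<alpha> * Q + R = 0"
proof
  define r where "r = R / Q"
  have "Im r = 0" unfolding r_def using par by (simp add: Im_divide)
  then have "r = of_real (Re r)" by (simp add: complex_eq_iff)
  moreover have "R = r * Q" unfolding r_def using Q by simp
  ultimately show "of_real (- Re r) * Q + R = 0" by (metis add.left_inverse mult_minus_left of_real_minus)
qed

section \<open>Gaps and maximal strips\<close>

definition gap :: "real set \<Rightarrow> real \<Rightarrow> real \<Rightarrow> bool" where
  "gap D a b \<longleftrightarrow> a < b \<and> a \<in> D \<and> b \<in> D \<and> {a<..<b} \<inter> D = {}"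

definition convex_in :: "real set \<Rightarrow> real set \<Rightarrow> bool" where
  "convex_in D Y \<longleftrightarrow> (\<forall>t1\<in>Y. \<forall>t2\<in>Y. t1 < t2 \<longrightarrow> {t1<..<t2} \<subseteq> D)"

lemma convex_in_closure:
  assumes "convex_in D Y" shows "convex_in D (closure Y)"
  unfolding convex_in_def
proof (intro ballI impI subsetI)
  fix x y z assume x: "x \<in> closure Y" and y: "y \<in> closure Y" and "x < y" and "z \<in> {x<..<y}"
  then have z: "x < z" "z < y" by auto
  obtain t1 where t1: "t1 \<in> Y" "dist t1 x < z - x"
    using x z(1) unfolding closure_approachable by (meson diff_gt_0_iff_gt)
  obtain t2 where t2: "t2 \<in> Y" "dist t2 y < y - z"
    using y z(2) unfolding closure_approachable by (meson diff_gt_0_iff_gt)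
  have "z \<in> {t1<..<t2}" using t1(2) t2(2) by (auto simp: dist_real_def)
  then show "z \<in> D" using assms t1(1) t2(1) unfolding convex_in_def by fastforce
qed

lemma no_gap_if_convex_in:
  assumes "convex_in (closure Y) Y" shows "\<not> gap (closure Y) a b"
proof
  assume "gap (closure Y) a b"
  then have ab: "a < b" "a \<in> closure Y" "b \<in> closure Y" and empty: "{a<..<b} \<inter> closure Y = {}"
    unfolding gap_def by auto
  have "{a<..<b} \<subseteq> closure Y"
    using convex_in_closure[OF assms] ab unfolding convex_in_def by blast
  moreover obtain z where "z \<in> {a<..<b}" using dense[OF ab(1)] by auto
  ultimately show False using empty by blast
qed

lemma gap_unique:
  assumes ab: "gap D a b"
    and left: "convex_in D (D \<inter> {..a})" and right: "convex_in D (D \<inter> {b..})"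
    and a'b': "gap D a' b'"
  shows "a' = a \<and> b' = b"
proof -
  have a'b'D: "a' < b'" "a' \<in> D" "b' \<in> D" "{a'<..<b'} \<inter> D = {}"
    and abD: "a < b" "a \<in> D" "b \<in> D" "{a<..<b} \<inter> D = {}"
    using ab a'b' unfolding gap_def by auto
  have no_fill: "\<not> {x<..<y} \<subseteq> D" if "{x<..<y} \<subseteq> {a'<..<b'}" "x < y" for x y
  proof -
    obtain z where "x < z" "z < y" using dense[OF \<open>x < y\<close>] by blast
    then have "z \<in> {x<..<y}" by simp
    then show ?thesis using that a'b'D(4) by blast
  qed
  have "\<not> b' \<le> a"
  proof
    assume "b' \<le> a"
    then have "{a'<..<b'} \<subseteq> D" using left a'b'D unfolding convex_in_def by auto
    then show False using no_fill[of a' b'] a'b'D(1) by blast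
  qed
  moreover have "\<not> b \<le> a'"
  proof
    assume "b \<le> a'"
    then have "{a'<..<b'} \<subseteq> D" using right a'b'D unfolding convex_in_def by auto
    then show False using no_fill[of a' b'] a'b'D(1) by blast
  qed
  ultimately have a': "a' \<le> a" and b': "b \<le> b'" using a'b'D abD by (auto simp: disjoint_iff)
  have "\<not> a' < a"
  proof
    assume "a' < a"
    then have "{a'<..<a} \<subseteq> D" using left a'b'D abD unfolding convex_in_def by auto
    moreover have "{a'<..<a} \<subseteq> {a'<..<b'}" using abD b' by auto
    ultimately show False using no_fill \<open>a' < a\<close> by blast
  qed
  moreover have "\<not> b < b'"
  proof
    assume "b < b'"
    then have "{b<..<b'} \<subseteq> D" using right a'b'D abD unfolding convex_in_def by auto
    moreover have "{b<..<b'} \<subseteq> {a'<..<b'}" using abD a' by auto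
    ultimately show False using no_fill \<open>b < b'\<close> by blast
  qed
  ultimately show ?thesis using a' b' by auto
qed

lemma gap_at_Sup_Inf:
  fixes Y :: "real set" and g :: real
  defines "YL \<equiv> {t\<in>Y. t < g}" and "YR \<equiv> {t\<in>Y. g < t}"
  assumes g: "g \<notin> closure Y" and L: "YL \<noteq> {}" and R: "YR \<noteq> {}"
  shows "gap (closure Y) (Sup YL) (Inf YR)"
    and "closure Y \<inter> {..Sup YL} = closure YL" and "closure Y \<inter> {Inf YR..} = closure YR"
proof -
  have "t \<noteq> g" if "t \<in> Y" for t using that g closure_subset by blast
  then have "Y = YL \<union> YR" unfolding YL_def YR_def by (auto simp: neq_iff)
  then have D: "closure Y = closure YL \<union> closure YR" by simp
  have YLb: "bdd_above YL" by (rule bdd_aboveI[of _ g]) (simp add: YL_def)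
  have YRb: "bdd_below YR" by (rule bdd_belowI[of _ g]) (simp add: YR_def)
  define a where "a = Sup YL"
  define b where "b = Inf YR"
  have aL: "a \<in> closure YL" and bR: "b \<in> closure YR"
    unfolding a_def b_def using closure_contains_Sup[OF L YLb] closure_contains_Inf[OF R YRb] .
  have La: "closure YL \<subseteq> {..a}"
    unfolding a_def using YLb by (intro closure_minimal) (auto intro: cSup_upper)
  have Rb: "closure YR \<subseteq> {b..}"
    unfolding b_def using YRb by (intro closure_minimal) (auto intro: cInf_lower)
  have "closure YL \<subseteq> {..g}" by (rule closure_minimal) (auto simp: YL_def)
  moreover have "closure YR \<subseteq> {g..}" by (rule closure_minimal) (auto simp: YR_def)
  moreover have "a \<noteq> g" "b \<noteq> g" using aL bR g D by auto
  ultimately have "a < g" "g < b" using aL bR by fastforce+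
  have "{a<..<b} \<inter> closure Y = {}" using D La Rb by force
  then show "gap (closure Y) (Sup YL) (Inf YR)"
    unfolding gap_def a_def[symmetric] b_def[symmetric] using aL bR D \<open>a < g\<close> \<open>g < b\<close> by auto
  show "closure Y \<inter> {..Sup YL} = closure YL"
  proof (intro equalityI subsetI)
    fix x assume "x \<in> closure Y \<inter> {..Sup YL}"
    then show "x \<in> closure YL" using D Rb \<open>a < g\<close> \<open>g < b\<close> unfolding a_def by force
  qed (use D La in \<open>auto simp: a_def\<close>)
  show "closure Y \<inter> {Inf YR..} = closure YR"
  proof (intro equalityI subsetI)
    fix x assume "x \<in> closure Y \<inter> {Inf YR..}"
    then show "x \<in> closure YR" using D La \<open>a < g\<close> \<open>g < b\<close> unfolding b_def by force
  qed (use D Rb in \<open>auto simp: b_def\<close>)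
qed

lemma ex1_gap_if_split:
  fixes Y :: "real set"
  assumes g: "g \<notin> closure Y" and L: "\<exists>t\<in>Y. t < g" and R: "\<exists>t\<in>Y. g < t"
    and convL: "convex_in (closure Y) {t\<in>Y. t < g}" and convR: "convex_in (closure Y) {t\<in>Y. g < t}"
  shows "\<exists>!p. gap (closure Y) (fst p) (snd p)"
proof -
  define a b where "a = Sup {t\<in>Y. t < g}" and "b = Inf {t\<in>Y. g < t}"
  have ne: "{t\<in>Y. t < g} \<noteq> {}" "{t\<in>Y. g < t} \<noteq> {}" using L R by auto
  note split = gap_at_Sup_Inf[OF g ne, folded a_def b_def]
  have "convex_in (closure Y) (closure Y \<inter> {..a})" "convex_in (closure Y) (closure Y \<inter> {b..})"
    unfolding split(2,3) using convL convR by (simp_all add: convex_in_closure)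
  note unique = gap_unique[OF split(1) this]
  show ?thesis
  proof (rule ex1I[of _ "(a, b)"])
    fix p assume "gap (closure Y) (fst p) (snd p)"
    then show "p = (a, b)" using unique by (simp add: prod_eq_iff)
  qed (use split(1) in simp)
qed

lemma maximal_strip_iff_gap:
  fixes G :: "complex set" and D :: "real set"
  assumes Im_in: "\<forall>w\<in>G. - Im w \<in> D" and Im_onto: "\<forall>t\<in>D. 0 < t \<longrightarrow> (\<exists>w\<in>G. Im w = - t)"
    and nonneg: "D \<subseteq> {0..}" and e: "e > 0" "{0<..<e} \<subseteq> D"
  shows "maximal_strip G s0 s1 \<longleftrightarrow> gap D (- s1) (- s0)"
proof
  assume "maximal_strip G s0 s1"
  then have lt: "s0 < s1" and free: "{w. s0 < Im w \<and> Im w < s1} \<inter> G = {}"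
    and "\<exists>w\<in>G. Im w = s0" "\<exists>w\<in>G. Im w = s1"
    unfolding maximal_strip_def by auto
  then have D0: "- s0 \<in> D" and D1: "- s1 \<in> D" using Im_in by auto
  have "{- s1<..<- s0} \<inter> D = {}"
  proof (rule ccontr)
    assume "{- s1<..<- s0} \<inter> D \<noteq> {}"
    then obtain t where t: "- s1 < t" "t < - s0" "t \<in> D" by auto
    have "0 < t" using nonneg D1 t(1) by force
    then obtain w where "w \<in> G" "Im w = - t" using Im_onto t(3) by blast
    then have "w \<in> {w. s0 < Im w \<and> Im w < s1} \<inter> G" using t by auto
    then show False using free by blast
  qed
  then show "gap D (- s1) (- s0)" using lt D0 D1 unfolding gap_def by auto
next
  assume "gap D (- s1) (- s0)"
  then have lt: "s0 < s1" and D0: "- s0 \<in> D" and D1: "- s1 \<in> D"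
    and free: "{- s1<..<- s0} \<inter> D = {}"
    unfolding gap_def by auto
  have pos: "0 < - s1"
  proof (rule ccontr)
    assume "\<not> 0 < - s1"
    then have "s1 = 0" using nonneg D1 by force
    then have "min e (- s0) / 2 \<in> {- s1<..<- s0} \<inter> D" using e lt by auto
    then show False using free by blast
  qed
  show "maximal_strip G s0 s1" unfolding maximal_strip_def
  proof (intro conjI)
    show "{w. s0 < Im w \<and> Im w < s1} \<inter> G = {}"
    proof (rule ccontr)
      assume "{w. s0 < Im w \<and> Im w < s1} \<inter> G \<noteq> {}"
      then obtain w where "w \<in> G" "s0 < Im w" "Im w < s1" by auto
      then have "- Im w \<in> {- s1<..<- s0} \<inter> D" using Im_in by auto
      then show False using free by blast
    qed
    show "\<exists>w\<in>G. Im w = s0" using Im_onto D0 pos lt by force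
    show "\<exists>w\<in>G. Im w = s1" using Im_onto D1 pos by force
  qed (use lt in simp)
qed

lemma ex1_maximal_strip_iff_ex1_gap:
  assumes "\<And>s0 s1. maximal_strip G s0 s1 \<longleftrightarrow> gap D (- s1) (- s0)"
  shows "(\<exists>!s. maximal_strip G (fst s) (snd s)) \<longleftrightarrow> (\<exists>!p. gap D (fst p) (snd p))"
  by (rule ex1_iff_involution[where f = "\<lambda>s. (- snd s, - fst s)"]) (simp_all add: assms)

locale unimodal_sublevel =
  fixes Y :: "real set" and f :: "real \<Rightarrow> real" and b m p :: real
  assumes pos: "Y \<subseteq> {0<..}" and m: "0 < m" "m < p"
    and sublevel: "\<And>t. 0 < t \<Longrightarrow> t < p \<Longrightarrow> f t < b \<Longrightarrow> t \<in> Y"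
    and below: "\<And>t. t \<in> Y \<Longrightarrow> t < p \<Longrightarrow> f t \<le> b"
    and inc: "strict_mono_on {0<..m} f" and dec: "strict_antimono_on {m..<p} f"
    and tail: "\<And>t t'. t \<in> Y \<Longrightarrow> p < t' \<Longrightarrow> t' < t \<Longrightarrow> t' \<in> Y"
begin

lemma descends:
  assumes "t \<in> Y" "m \<le> t" "t < t'" "t' < p" shows "t' \<in> Y"
proof (rule sublevel)
  have "f t' < f t" using monotone_onD[OF dec, of t t'] assms by auto
  then show "f t' < b" using below[of t] assms by simp
qed (use assms m in auto)

lemma p_in_closure: "{x<..<p} \<subseteq> Y \<Longrightarrow> x < p \<Longrightarrow> p \<in> closure Y"
  using closure_mono[of "{x<..<p}" Y] by auto

lemma convex_in_right: "convex_in (closure Y) {t\<in>Y. m < t}"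
  unfolding convex_in_def
proof (intro ballI impI subsetI)
  fix t1 t2 t' assume t1: "t1 \<in> {t\<in>Y. m < t}" and t2: "t2 \<in> {t\<in>Y. m < t}" and "t' \<in> {t1<..<t2}"
  then have t': "t1 < t'" "t' < t2" by auto
  consider "t' < p" | "t' = p" | "p < t'" by linarith
  then show "t' \<in> closure Y"
  proof cases
    case 1 then have "t' \<in> Y" using descends[of t1 t'] t1 t' by simp
    then show ?thesis using closure_subset by blast
  next
    case 2
    then have "{t1<..<p} \<subseteq> Y" using descends t1 by auto
    then show ?thesis using p_in_closure[of t1] 2 t' by simp
  next
    case 3 then have "t' \<in> Y" using tail[of t2 t'] t2 t' by simp
    then show ?thesis using closure_subset by blast
  qed
qed

lemma gapless_if_peak_le:
  assumes "f m \<le> b" shows "convex_in (closure Y) Y"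
  unfolding convex_in_def
proof (intro ballI impI subsetI)
  fix t1 t2 t' assume t1: "t1 \<in> Y" and t2: "t2 \<in> Y" and "t' \<in> {t1<..<t2}"
  then have t': "t1 < t'" "t' < t2" and "0 < t'" using pos by auto
  have mid: "{m<..<p} \<subseteq> Y"
  proof
    fix x assume "x \<in> {m<..<p}"
    then have "f x < f m" "0 < x" using monotone_onD[OF dec, of m x] m by auto
    then show "x \<in> Y" using sublevel assms \<open>x \<in> {m<..<p}\<close> by auto
  qed
  consider "t' < m" | "t' = m" | "m < t'" "t' < p" | "t' = p" | "p < t'" by linarith
  then show "t' \<in> closure Y"
  proof cases
    case 1
    then have "f t' < f m" using monotone_onD[OF inc, of t' m] \<open>0 < t'\<close> m by auto
    then have "t' \<in> Y" using sublevel[of t'] \<open>0 < t'\<close> 1 m assms by simp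
    then show ?thesis using closure_subset by blast
  next
    case 2 then show ?thesis using closure_mono[OF mid] m by auto
  next
    case 3 then have "t' \<in> Y" using mid by auto
    then show ?thesis using closure_subset by blast
  next
    case 4 then show ?thesis using p_in_closure[OF mid m(2)] by simp
  next
    case 5 then have "t' \<in> Y" using tail[of t2 t'] t2 t' by simp
    then show ?thesis using closure_subset by blast
  qed
qed

lemma peak_not_in_closure:
  assumes "b < f m" "isCont f m" shows "m \<notin> closure Y"
proof
  assume "m \<in> closure Y"
  have "\<forall>\<^sub>F t in at m. b < f t" using assms by (intro order_tendstoD(1)) (auto simp: isCont_def)
  then obtain e where e: "e > 0" "\<And>t. t \<noteq> m \<Longrightarrow> dist t m < e \<Longrightarrow> b < f t"
    unfolding eventually_at by blast
  have "min e (p - m) > 0" using e(1) m by simp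
  then obtain t where t: "t \<in> Y" "dist t m < min e (p - m)"
    using \<open>m \<in> closure Y\<close> unfolding closure_approachable by blast
  then have "t < p" by (auto simp: dist_real_def)
  then have "f t \<le> b" using below t(1) by blast
  moreover have "b < f t" using e(2)[of t] t assms(1) by (cases "t = m") auto
  ultimately show False by simp
qed

lemma ex1_gap_if_peak_gt:
  assumes "b < f m" "isCont f m" and "\<exists>t\<in>Y. t < m" "\<exists>t\<in>Y. m < t"
  shows "\<exists>!q. gap (closure Y) (fst q) (snd q)"
proof (rule ex1_gap_if_split[OF peak_not_in_closure[OF assms(1,2)] assms(3,4) _ convex_in_right])
  show "convex_in (closure Y) {t\<in>Y. t < m}"
    unfolding convex_in_def
  proof (intro ballI impI subsetI)
    fix t1 t2 t' assume t1: "t1 \<in> {t\<in>Y. t < m}" and t2: "t2 \<in> {t\<in>Y. t < m}" and "t' \<in> {t1<..<t2}"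
    then have t': "t1 < t'" "t' < t2" "t2 < m" "0 < t1" using pos by auto
    then have "f t' < f t2" using monotone_onD[OF inc, of t' t2] by auto
    moreover have "f t2 \<le> b" using below[of t2] t2 t' m by simp
    ultimately have "t' \<in> Y" using sublevel[of t'] t' m by simp
    then show "t' \<in> closure Y" using closure_subset by blast
  qed
qed

end

section \<open>The curve and its depths\<close>

definition kappa :: "real \<Rightarrow> real \<Rightarrow> real \<Rightarrow> real" where
  "kappa c h t = t^2 - 2*h*t + c"

definition quartic :: "real \<Rightarrow> real \<Rightarrow> real \<Rightarrow> real \<Rightarrow> real" where
  "quartic c h b t = (kappa c h t)^2 - b*(h*t - c)"

definition parab :: "real \<Rightarrow> real \<Rightarrow> real" where
  "parab h t = 4*t*(h - t)"

definition iota :: "real \<Rightarrow> real \<Rightarrow> real \<Rightarrow> real" where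
  "iota c h t = h*t^2 - 2*c*t + c*h"

text \<open>For \<open>\<omega> = x - i t\<close> with \<open>x \<noteq> 0\<close> and \<open>h = d/2\<close>, eliminating \<open>\<alpha>\<close> between the real and
  imaginary parts of \<open>p\<^sub>(\<^sub>\<alpha>\<^sub>,\<^sub>\<beta>\<^sub>)(\<omega>) = 0\<close> leaves \<open>curve c h \<beta> (x\<^sup>2) t = 0\<close>.\<close>

definition curve :: "real \<Rightarrow> real \<Rightarrow> real \<Rightarrow> real \<Rightarrow> real \<Rightarrow> real" where
  "curve c h b s t = t*((kappa c h t - s)^2 + 4 * s*(t - h)^2) + b*c*t - b*h*(s + t^2)"

definition depths :: "real \<Rightarrow> real \<Rightarrow> real \<Rightarrow> real set" where
  "depths c h b = {t. 0 < t \<and> (\<exists>s>0. curve c h b s t = 0)}"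

lemma curve_parab_form:
  "h^2 * curve c h b s t
     = t*((h * s + t*(h*t - c)) - c*(h - t))^2 - h^2*(h * s + t*(h*t - c))*(b - parab h t)"
  unfolding curve_def kappa_def parab_def by algebra

lemma curve_iota_form:
  "h^2 * curve c h b s t
     = t*((h * s + t*(h*t - c)) + c*(h - t))^2 - (h * s + t*(h*t - c))*(b*h^2 - 4*(h^2 - c)*(t*(h - t)))"
  unfolding curve_def kappa_def by algebra

lemma curve_quadratic:
  "curve c h b s t = t * s^2 + (2*t*(t^2 - 2*h*t + 2*h^2 - c) - b*h) * s + t*quartic c h b t"
  unfolding curve_def kappa_def quartic_def by algebra

lemma curve_sum_form:
  "curve c h b s t = t*((kappa c h t - s)^2 + 4 * s*(t - h)^2) - b*(h * s + t*(h*t - c))"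
  unfolding curve_def by algebra

lemma kappa_sq_eq: "(kappa c h t)^2 = parab h t * (h*t - c) + (t^2 - c)^2"
  unfolding kappa_def parab_def by algebra

lemma kappa_eq: "kappa c h x = (x - h)^2 - (h^2 - c)"
  unfolding kappa_def by algebra

lemma parab_eq: "parab h t = h^2 - (2*t - h)^2"
  unfolding parab_def by algebra

lemma parab_le: "parab h t \<le> h^2"
  using parab_eq[of h t] by (smt (verit) zero_le_power2)

lemma parab_strict_mono_on: "strict_mono_on {..h/2} (parab h)"
proof (rule monotone_onI)
  fix x y assume "x \<in> {..h/2}" "y \<in> {..h/2}" "x < y"
  then have "0 < 4*(y - x)*(h - x - y)" by (auto intro!: mult_pos_pos)
  moreover have "parab h y - parab h x = 4*(y - x)*(h - x - y)" unfolding parab_def by algebra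
  ultimately show "parab h x < parab h y" by linarith
qed

lemma parab_strict_antimono_on: "strict_antimono_on {h/2..} (parab h)"
proof (rule monotone_onI)
  fix x y assume "x \<in> {h/2..}" "y \<in> {h/2..}" "x < y"
  then have "0 < 4*(y - x)*(x + y - h)" by (auto intro!: mult_pos_pos)
  moreover have "parab h x - parab h y = 4*(y - x)*(x + y - h)" unfolding parab_def by algebra
  ultimately show "parab h y < parab h x" by linarith
qed

lemma iota_convex:
  assumes "h < t'" "t' < t" "h > 0"
  shows "(t - h)*iota c h t' \<le> (t - t')*iota c h h + (t' - h)*iota c h t"
proof -
  have "(t - h)*iota c h t' = (t - t')*iota c h h + (t' - h)*iota c h t - h*(t' - h)*(t - t')*(t - h)"
    unfolding iota_def by algebra
  moreover have "h*(t' - h)*(t - t')*(t - h) \<ge> 0" using assms by simp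
  ultimately show ?thesis by linarith
qed

definition phi :: "real \<Rightarrow> real \<Rightarrow> real \<Rightarrow> real" where
  "phi c h t = (kappa c h t)^2 / (h*t - c)"

definition rho :: "real \<Rightarrow> real \<Rightarrow> real \<Rightarrow> real" where
  "rho c h t = 3*h*t^2 - (4*c + 2*h^2)*t + 3*h*c"

lemma phi_has_derivative:
  assumes "h*x - c \<noteq> 0"
  shows "(phi c h has_real_derivative (kappa c h x * rho c h x / (h*x - c)^2)) (at x)"
proof -
  have e: "phi c h = (\<lambda>x. (x^2 - 2*h*x + c)^2 / (h*x - c))" unfolding phi_def kappa_def by auto
  have "((\<lambda>x. (x^2 - 2*h*x + c)^2 / (h*x - c)) has_real_derivative
     ((2*(x^2 - 2*h*x + c)*(2*x - 2*h))*(h*x - c) - (x^2 - 2*h*x + c)^2*h)/((h*x - c)*(h*x - c))) (at x)"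
    using assms by (auto intro!: derivative_eq_intros simp: algebra_simps power2_eq_square)
  moreover have "((2*(x^2 - 2*h*x + c)*(2*x - 2*h))*(h*x - c) - (x^2 - 2*h*x + c)^2*h)/((h*x - c)*(h*x - c))
     = kappa c h x * rho c h x / (h*x - c)^2"
    unfolding kappa_def rho_def power2_eq_square by (simp add: algebra_simps)
  ultimately show ?thesis unfolding e by simp
qed

lemma isCont_phi: "h*x - c \<noteq> 0 \<Longrightarrow> isCont (phi c h) x"
  using phi_has_derivative DERIV_isCont by blast

lemma phi_less_if_deriv_pos:
  assumes "x < y" "h*x - c > 0" "h > 0"
    and "\<And>z. x < z \<Longrightarrow> z < y \<Longrightarrow> kappa c h z * rho c h z > 0"
  shows "phi c h x < phi c h y"
proof (rule DERIV_pos_imp_increasing_open[OF assms(1)])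
  have pos: "h*z - c > 0" if "z \<ge> x" for z using assms(2,3) that by (smt (verit) mult_left_mono)
  show "continuous_on {x..y} (phi c h)"
    using pos by (intro continuous_at_imp_continuous_on ballI isCont_phi) auto
  fix z assume z: "x < z" "z < y"
  then have "kappa c h z * rho c h z / (h*z - c)^2 > 0" using assms(4)[OF z] pos[of z] by simp
  moreover have "h*z - c \<noteq> 0" using pos[of z] z by simp
  ultimately show "\<exists>D. (phi c h has_real_derivative D) (at z) \<and> D > 0"
    using phi_has_derivative by blast
qed

lemma phi_less_if_deriv_neg:
  assumes "x < y" "h*x - c > 0" "h > 0"
    and "\<And>z. x < z \<Longrightarrow> z < y \<Longrightarrow> kappa c h z * rho c h z < 0"
  shows "phi c h y < phi c h x"
proof (rule DERIV_neg_imp_decreasing_open[OF assms(1)])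
  have pos: "h*z - c > 0" if "z \<ge> x" for z using assms(2,3) that by (smt (verit) mult_left_mono)
  show "continuous_on {x..y} (phi c h)"
    using pos by (intro continuous_at_imp_continuous_on ballI isCont_phi) auto
  fix z assume z: "x < z" "z < y"
  then have "kappa c h z * rho c h z / (h*z - c)^2 < 0"
    using assms(4)[OF z] pos[of z] by (simp add: divide_neg_pos)
  moreover have "h*z - c \<noteq> 0" using pos[of z] z by simp
  ultimately show "\<exists>D. (phi c h has_real_derivative D) (at z) \<and> D < 0"
    using phi_has_derivative by blast
qed

lemma parab_le_phi: "h*t - c > 0 \<Longrightarrow> parab h t \<le> phi c h t"
  unfolding phi_def kappa_sq_eq by (simp add: field_simps)

lemma phi_sqrt_eq_parab:
  assumes "h * sqrt c - c \<noteq> 0" "c \<ge> 0" shows "phi c h (sqrt c) = parab h (sqrt c)"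
  using assms unfolding phi_def kappa_sq_eq by simp

lemma rho_eq_kappa: "rho c h t = 2*(2*t - 2*h)*(h*t - c) - h*kappa c h t"
  unfolding rho_def kappa_def by algebra

lemma rho_shifted: "rho (h^2 - e^2) h (h + e + u) = 4*e^2*(h + e) + (6*h*e + 4*e^2)*u + 3*h*u^2"
  unfolding rho_def by algebra

lemma rho_completed_square: "12*h*rho c h x = (6*h*x - 4*c - 2*h^2)^2 - 4*(h^2 - c)*(h^2 - 4*c)"
  unfolding rho_def by algebra

definition rho_root1 :: "real \<Rightarrow> real \<Rightarrow> real" where
  "rho_root1 c h = ((4*c + 2*h^2) - 2* sqrt ((h^2 - c)*(h^2 - 4*c)))/(6*h)"

definition rho_root2 :: "real \<Rightarrow> real \<Rightarrow> real" where
  "rho_root2 c h = ((4*c + 2*h^2) + 2* sqrt ((h^2 - c)*(h^2 - 4*c)))/(6*h)"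

lemma rho_factor:
  assumes h0: "h > 0" and c0: "c \<ge> 0" and c4: "4*c \<le> h^2"
  shows "rho c h x = 3*h*(x - rho_root1 c h)*(x - rho_root2 c h)"
proof -
  define R where "R = sqrt ((h^2 - c)*(h^2 - 4*c))"
  have R2: "R^2 = (h^2 - c)*(h^2 - 4*c)" unfolding R_def using c4 c0 by simp
  have sum: "rho_root1 c h + rho_root2 c h = (4*c + 2*h^2)/(3*h)"
    unfolding rho_root1_def rho_root2_def R_def[symmetric] using h0 by (simp add: field_simps)
  have "rho_root1 c h * rho_root2 c h = ((4*c + 2*h^2)^2 - 4*R^2)/(36*h^2)"
    unfolding rho_root1_def rho_root2_def R_def[symmetric] using h0 by (simp add: field_simps power2_eq_square)
  also have "(4*c + 2*h^2)^2 - 4*R^2 = 36*h^2*c" unfolding R2 by algebra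
  finally have prod: "rho_root1 c h * rho_root2 c h = c" using h0 by simp
  have "3*h*(x - rho_root1 c h)*(x - rho_root2 c h)
      = 3*h*(x^2 - (rho_root1 c h + rho_root2 c h)*x + rho_root1 c h * rho_root2 c h)"
    by (simp add: algebra_simps power2_eq_square)
  also have "\<dots> = rho c h x" unfolding sum prod rho_def using h0 by (simp add: field_simps)
  finally show ?thesis ..
qed

lemma rho_roots_bounds:
  assumes h0: "h > 0" and c0: "c \<ge> 0" and c4: "4*c \<le> h^2"
  shows "rho_root1 c h \<le> sqrt c" "sqrt c \<le> rho_root2 c h" "rho_root2 c h \<le> h" "0 < rho_root2 c h"
proof -
  define R where "R = sqrt ((h^2 - c)*(h^2 - 4*c))"
  have R0: "R \<ge> 0" unfolding R_def using c4 c0 by simp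
  have r12: "rho_root1 c h \<le> rho_root2 c h"
    unfolding rho_root1_def rho_root2_def R_def[symmetric] using R0 h0 by (simp add: field_simps)
  have "h^2 > 0" using h0 by simp
  then have "4*c + 2*h^2 + 2*R > 0" using R0 c0 by linarith
  then show "0 < rho_root2 c h" unfolding rho_root2_def R_def[symmetric] using h0 by simp
  have "2 * sqrt c \<le> h" using real_sqrt_le_mono[OF c4] h0 by (simp add: real_sqrt_mult)
  moreover have "0 \<le> sqrt c" using c0 by simp
  ultimately have "0 \<le> h - sqrt c" "0 \<le> h - 2 * sqrt c" "0 \<le> 2 * sqrt c" by linarith+
  then have "2 * sqrt c * ((h - sqrt c)*(h - 2 * sqrt c)) \<ge> 0"
    using mult_nonneg_nonneg[OF _ mult_nonneg_nonneg] by blast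
  moreover have "rho (w^2) h w = -(2*w*((h - w)*(h - 2*w)))" for w
    unfolding rho_def by algebra
  from this[of "sqrt c"] have "rho c h (sqrt c) = -(2 * sqrt c * ((h - sqrt c)*(h - 2 * sqrt c)))"
    using c0 by simp
  ultimately have "3*h*((sqrt c - rho_root1 c h)*(sqrt c - rho_root2 c h)) \<le> 0"
    using rho_factor[OF assms, of "sqrt c"] by (simp add: mult.assoc)
  then have "(sqrt c - rho_root1 c h)*(sqrt c - rho_root2 c h) \<le> 0" using h0 by (simp add: mult_le_0_iff)
  then show "rho_root1 c h \<le> sqrt c" "sqrt c \<le> rho_root2 c h"
    using r12 by (auto simp: mult_le_0_iff)
  have "(h^2 - c)*(h^2 - 4*c) \<le> (2*(h^2 - c))^2"
  proof -
    have "(2*(h^2 - c))^2 = (h^2 - c)*(4*(h^2 - c))" by algebra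
    moreover have "h^2 - c \<ge> 0" using c4 c0 by simp
    ultimately show ?thesis using c0 by (simp add: mult_left_mono)
  qed
  then have "R \<le> sqrt ((2*(h^2 - c))^2)" unfolding R_def by (rule real_sqrt_le_mono)
  also have "\<dots> = 2*(h^2 - c)" using c4 c0 by simp
  finally have "R \<le> 2*(h^2 - c)" .
  then have "4*c + 2*h^2 + 2*R \<le> 6*h*h" by (simp add: power2_eq_square)
  then show "rho_root2 c h \<le> h" unfolding rho_root2_def R_def[symmetric] using h0 by (simp add: field_simps)
qed

lemma rho_roots_prod:
  assumes "h > 0" "c \<ge> 0" "4*c \<le> h^2" shows "rho_root1 c h * rho_root2 c h = c"
  using rho_factor[OF assms, of 0] assms(1) unfolding rho_def by (simp add: algebra_simps)

definition monic_quartic :: "real \<Rightarrow> real \<Rightarrow> real \<Rightarrow> real \<Rightarrow> real \<Rightarrow> real" where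
  "monic_quartic B C D E m = m^4 + B*m^3 + C*m^2 + D*m + E"

definition monic_quartic_deriv :: "real \<Rightarrow> real \<Rightarrow> real \<Rightarrow> real \<Rightarrow> real" where
  "monic_quartic_deriv B C D m = 4*m^3 + 3*B*m^2 + 2*C*m + D"

lemma disc4_two_roots_factor:
  "disc4 1 (p - a - b) (r - (a + b)*p + a*b) (a*b*p - (a + b)*r) (a*b*r)
     = (a - b)^2 * (p^2 - 4*r) * (a^2 + p*a + r)^2 * (b^2 + p*b + r)^2"
  unfolding disc4_def by (simp only: power_one mult_1 mult_1_right) algebra

lemma disc4_zero_if_double_root:
  assumes f: "monic_quartic B C D E e = 0" and f': "monic_quartic_deriv B C D e = 0"
  shows "disc4 1 B C D E = 0"
proof -
  define p where "p = B + 2*e"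
  define r where "r = C + 2*e*p - e*e"
  define L where "L = D - (e*e*p - 2*e*r)"
  define M where "M = E - e*e*r"
  have "monic_quartic B C D E e = L*e + M" "monic_quartic_deriv B C D e = L"
    unfolding monic_quartic_def monic_quartic_deriv_def p_def r_def L_def M_def by algebra+
  then have "L = 0" "M = 0" using f f' by simp_all
  then have co: "B = p - e - e" "C = r - (e + e)*p + e*e" "D = e*e*p - (e + e)*r" "E = e*e*r"
    unfolding p_def r_def L_def M_def by simp_all
  show ?thesis unfolding co disc4_two_roots_factor by simp
qed

lemma double_root_if_disc4_zero:
  assumes f1: "monic_quartic B C D E a = 0" and f2: "monic_quartic B C D E b = 0" and ne: "a \<noteq> b"
    and dz: "disc4 1 B C D E = 0"
  shows "\<exists>e. monic_quartic B C D E e = 0 \<and> monic_quartic_deriv B C D e = 0"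
proof -
  define p where "p = B + a + b"
  define r where "r = C + (a + b)*p - a*b"
  define L where "L = D - (a*b*p - (a + b)*r)"
  define M where "M = E - a*b*r"
  have f: "monic_quartic B C D E m = (m - a)*(m - b)*(m^2 + p*m + r) + L*m + M" for m
    unfolding monic_quartic_def p_def r_def L_def M_def by algebra
  have f': "monic_quartic_deriv B C D m = (2*m - a - b)*(m^2 + p*m + r) + (m - a)*(m - b)*(2*m + p) + L" for m
    unfolding monic_quartic_deriv_def p_def r_def L_def by algebra
  have "L*a + M = 0" "L*b + M = 0" using f[of a] f[of b] f1 f2 by simp_all
  moreover have "L*(a - b) = (L*a + M) - (L*b + M)" by algebra
  ultimately have "L*(a - b) = 0" by simp
  then have L0: "L = 0" and M0: "M = 0" using ne \<open>L*a + M = 0\<close> by simp_all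
  then have "B = p - a - b" "C = r - (a + b)*p + a*b" "D = a*b*p - (a + b)*r" "E = a*b*r"
    unfolding p_def r_def L_def M_def by simp_all
  then have "(a - b)^2 * (p^2 - 4*r) * (a^2 + p*a + r)^2 * (b^2 + p*b + r)^2 = 0"
    using dz disc4_two_roots_factor by metis
  then consider "p^2 - 4*r = 0" | "a^2 + p*a + r = 0" | "b^2 + p*b + r = 0" using ne by auto
  then show ?thesis
  proof cases
    case 1
    have "(-p/2)^2 + p*(-p/2) + r = 0" using 1 by (simp add: field_simps power2_eq_square)
    then show ?thesis using f[of "-p/2"] f'[of "-p/2"] L0 M0 by (intro exI[of _ "-p/2"]) simp
  next
    case 2 then show ?thesis using f1 f'[of a] L0 by auto
  next
    case 3 then show ?thesis using f2 f'[of b] L0 by auto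
  qed
qed

text \<open>With \<open>d = 2 h\<close>, \<open>quartic c h \<beta> t = q\<^sub>\<beta>(-t)\<close>.\<close>

lemma quartic_eq_monic_quartic:
  "quartic c h b t = monic_quartic (4*h) (2*c + 4*h^2) (2*h*(b/2 + 2*c)) (c*(b + c)) (- t)"
  unfolding quartic_def kappa_def monic_quartic_def
  by (simp add: power2_eq_square power3_eq_cube power4_eq_xxxx algebra_simps)

lemma quartic_deriv_eq_monic_quartic_deriv:
  "2*kappa c h t*(2*t - 2*h) - b*h = - monic_quartic_deriv (4*h) (2*c + 4*h^2) (2*h*(b/2 + 2*c)) (- t)"
  unfolding kappa_def monic_quartic_deriv_def by (simp add: power2_eq_square power3_eq_cube algebra_simps)

lemma disc_q_eq_disc4: "disc_q c b (2*h) = disc4 1 (4*h) (2*c + 4*h^2) (2*h*(b/2 + 2*c)) (c*(b + c))"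
  unfolding disc_q_def by (simp add: power2_eq_square)

locale curve_setting =
  fixes c h b :: real
  assumes c0: "c \<ge> 0" and h0: "h > 0" and b0: "b > 0"
begin

lemma depths_pos: "depths c h b \<subseteq> {0<..}"
  unfolding depths_def by auto

lemma pos_if_curve_root:
  assumes s: "s > 0" and F: "curve c h b s t = 0" shows "t > 0"
proof (rule ccontr)
  assume "\<not> t > 0"
  then have "t*((kappa c h t - s)^2 + 4 * s*(t - h)^2) \<le> 0" "b*c*t \<le> 0"
    using s b0 c0 by (simp_all add: mult_nonpos_nonneg mult_nonneg_nonpos)
  moreover have "b*h*(s + t^2) > 0" using s b0 h0 by (simp add: add_pos_nonneg)
  ultimately have "curve c h b s t < 0" unfolding curve_def by linarith
  then show False using F by simp
qed

lemma depth_if_quartic_neg: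
  assumes t: "t > 0" and q: "quartic c h b t < 0" shows "t \<in> depths c h b"
proof -
  have "t*0^2 + (2*t*(t^2 - 2*h*t + 2*h^2 - c) - b*h)*0 + t*quartic c h b t \<le> 0"
    using mult_pos_neg[OF t q] by simp
  then obtain s where s: "s \<ge> 0" "t * s^2 + (2*t*(t^2 - 2*h*t + 2*h^2 - c) - b*h) * s + t*quartic c h b t = 0"
    using quadratic_root_ge[OF t] by blast
  have "s \<noteq> 0" using s(2) t q by auto
  then have "s > 0" "curve c h b s t = 0" using s curve_quadratic[of c h b s t] by auto
  then show ?thesis unfolding depths_def using t by blast
qed

lemma depth_if_parab_le:
  assumes t: "t > 0" "t \<le> h" "t^2 < c" and P: "parab h t \<le> b" shows "t \<in> depths c h b"
proof -
  define w where "w = h - t"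
  define B where "B = 2*t*c*w + h^2*(b - parab h t)"
  have w0: "w \<ge> 0" using t unfolding w_def by simp
  have "t*(c*w)^2 + (-B)*(c*w) + t*c^2*w^2 = -(h^2*(b - parab h t)*(c*w))"
    unfolding B_def by algebra
  also have "\<dots> \<le> 0" using P w0 c0 by (simp add: mult_nonneg_nonneg)
  finally obtain x where x: "x \<ge> c*w" "t*x^2 + (-B)*x + t*c^2*w^2 = 0"
    using quadratic_root_ge[OF t(1)] by blast
  define s where "s = (x - t*(h*t - c))/h"
  have hs: "h * s + t*(h*t - c) = x" unfolding s_def using h0 by simp
  have "c*w - t*(h*t - c) = h*(c - t^2)" unfolding w_def by algebra
  then have "c*w - t*(h*t - c) > 0" using h0 t by simp
  then have "s > 0" unfolding s_def using x(1) h0 by simp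
  moreover have "h^2 * curve c h b s t = 0"
    unfolding curve_parab_form hs using x(2) unfolding B_def w_def by algebra
  then have "curve c h b s t = 0" using h0 by simp
  ultimately show ?thesis unfolding depths_def using t by blast
qed

lemma depth_if_iota_neg:
  assumes t: "t > h" and io: "iota c h t < 0" and M: "4*(h^2 - c)*(t*(h - t)) \<le> b*h^2"
  shows "t \<in> depths c h b"
proof -
  have t0: "t > 0" using t h0 by simp
  define w where "w = h - t"
  define M where "M = b*h^2 - 4*(h^2 - c)*(t*(h - t))"
  have w0: "w < 0" using t unfolding w_def by simp
  have "t*(-(c*w))^2 + (2*t*c*w - M)*(-(c*w)) + t*c^2*w^2 = M*(c*w)"
    by algebra
  also have "\<dots> \<le> 0" using M w0 c0 unfolding M_def by (simp add: mult_nonneg_nonpos)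
  finally obtain x where x: "x \<ge> -(c*w)" "t*x^2 + (2*t*c*w - M)*x + t*c^2*w^2 = 0"
    using quadratic_root_ge[OF t0] by blast
  define s where "s = (x - t*(h*t - c))/h"
  have hs: "h * s + t*(h*t - c) = x" unfolding s_def using h0 by simp
  have "-(c*w) - t*(h*t - c) = - iota c h t" unfolding w_def iota_def by algebra
  then have "-(c*w) - t*(h*t - c) > 0" using io by simp
  then have "s > 0" unfolding s_def using x(1) h0 by simp
  moreover have "h^2 * curve c h b s t = 0"
    unfolding curve_iota_form hs using x(2) unfolding M_def w_def by algebra
  then have "curve c h b s t = 0" using h0 by simp
  ultimately show ?thesis unfolding depths_def using t0 by blast
qed

lemma depth_witness:
  assumes "t \<in> depths c h b"
  obtains s where "s > 0" "t > 0" "curve c h b s t = 0" "h * s + t*(h*t - c) \<ge> 0"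
    "c = 0 \<Longrightarrow> h * s + t*(h*t - c) > 0"
proof -
  obtain s where s: "s > 0" "t > 0" "curve c h b s t = 0" using assms unfolding depths_def by blast
  have "b*(h * s + t*(h*t - c)) = t*((kappa c h t - s)^2 + 4 * s*(t - h)^2)"
    using s(3) curve_sum_form[of c h b s t] by simp
  also have "\<dots> \<ge> 0" using s(1,2) by simp
  finally have "h * s + t*(h*t - c) \<ge> 0" using b0 by (simp add: zero_le_mult_iff)
  moreover have "h * s + t*(h*t - c) > 0" if "c = 0"
  proof -
    have "h * s > 0" "t*(h*t) > 0" using h0 s by simp_all
    then show ?thesis using that by simp
  qed
  ultimately show ?thesis using that s by blast
qed

lemma parab_le_if_depth:
  assumes Y: "t \<in> depths c h b" and th: "t \<le> h" shows "parab h t \<le> b"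
proof -
  obtain s where s: "s > 0" "t > 0" "curve c h b s t = 0" "h * s + t*(h*t - c) \<ge> 0"
    "c = 0 \<Longrightarrow> h * s + t*(h*t - c) > 0" using depth_witness[OF Y] by blast
  define x where "x = h * s + t*(h*t - c)"
  have e: "t*(x - c*(h - t))^2 = h^2*x*(b - parab h t)"
    using curve_parab_form[of h c b s t] s(3) unfolding x_def by simp
  show ?thesis
  proof (cases "x > 0")
    case True
    have "h^2*x*(b - parab h t) \<ge> 0" using e[symmetric] s(2) by simp
    moreover have "h^2*x > 0" using True h0 by simp
    ultimately show ?thesis by (simp add: zero_le_mult_iff)
  next
    case False
    then have x0: "x = 0" using s(4) unfolding x_def by simp
    then have "c = 0 \<or> h = t" using e s(2) by simp
    then show ?thesis using s(5) x0 b0 unfolding x_def parab_def by auto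
  qed
qed

lemma weighted_parab_le_if_depth:
  assumes Y: "t \<in> depths c h b" shows "4*(h^2 - c)*(t*(h - t)) \<le> b*h^2"
proof -
  obtain s where s: "s > 0" "t > 0" "curve c h b s t = 0" "h * s + t*(h*t - c) \<ge> 0"
    "c = 0 \<Longrightarrow> h * s + t*(h*t - c) > 0" using depth_witness[OF Y] by blast
  define x where "x = h * s + t*(h*t - c)"
  have e: "t*(x + c*(h - t))^2 = x*(b*h^2 - 4*(h^2 - c)*(t*(h - t)))"
    using curve_iota_form[of h c b s t] s(3) unfolding x_def by simp
  show ?thesis
  proof (cases "x > 0")
    case True
    have "x*(b*h^2 - 4*(h^2 - c)*(t*(h - t))) \<ge> 0" using e[symmetric] s(2) by simp
    then show ?thesis using True by (simp add: zero_le_mult_iff)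
  next
    case False
    then have x0: "x = 0" using s(4) unfolding x_def by simp
    then have "c = 0 \<or> h = t" using e s(2) by simp
    then show ?thesis using s(5) x0 b0 unfolding x_def by auto
  qed
qed

lemma quartic_nonpos_if_depth:
  assumes Y: "t \<in> depths c h b" and tc: "t^2 \<ge> c" and io: "iota c h t \<ge> 0"
  shows "quartic c h b t \<le> 0"
proof -
  obtain s where s: "s > 0" "t > 0" "curve c h b s t = 0" using Y unfolding depths_def by blast
  define x where "x = h * s + t*(h*t - c)"
  define tau where "tau = t*(h*t - c)"
  define w where "w = h - t"
  define B where "B = 2*t*c*w + h^2*(b - parab h t)"
  have G: "h^2 * curve c h b ((y - tau)/h) t = t*y^2 - B*y + t*c^2*w^2" for y
  proof -
    have "h*((y - tau)/h) + t*(h*t - c) = y" unfolding tau_def using h0 by simp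
    then show ?thesis
      using curve_parab_form[of h c b "(y - tau)/h" t] unfolding B_def w_def
      by (simp add: algebra_simps power2_eq_square)
  qed
  have Gx: "t*x^2 - B*x + t*c^2*w^2 = 0"
    using G[of x] s(3) h0 unfolding x_def tau_def by simp
  have Gt: "t*tau^2 - B*tau + t*c^2*w^2 = h^2 * t * quartic c h b t"
    using G[of tau] curve_quadratic[of c h b 0 t] by simp
  have "x*(t*tau^2 - B*tau + t*c^2*w^2) - t*(tau - x)*(x*tau - c^2*w^2) = tau*(t*x^2 - B*x + t*c^2*w^2)"
    by algebra
  then have fac: "x*(h^2 * t * quartic c h b t) = t*(tau - x)*(x*tau - c^2*w^2)"
    using Gx Gt by simp
  have a1: "tau - c*w \<ge> 0" and a2: "tau + c*w \<ge> 0"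
  proof -
    have "tau - c*w = h*(t^2 - c)" "tau + c*w = iota c h t"
      unfolding tau_def w_def iota_def by algebra+
    then show "tau - c*w \<ge> 0" "tau + c*w \<ge> 0" using tc io h0 by simp_all
  qed
  have xt: "x > tau" unfolding x_def tau_def using s(1) h0 by simp
  have "x*tau - c^2*w^2 \<ge> tau*tau - c^2*w^2" using xt a1 a2 by (simp add: mult_right_mono)
  also have "tau*tau - c^2*w^2 = (tau - c*w)*(tau + c*w)" by algebra
  finally have "x*tau - c^2*w^2 \<ge> 0" using mult_nonneg_nonneg[OF a1 a2] by linarith
  then have "x*(h^2 * t * quartic c h b t) \<le> 0"
    unfolding fac using s(2) xt by (simp add: mult_nonpos_nonneg mult_nonneg_nonpos)
  moreover have "x > 0" using xt a1 a2 by simp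
  ultimately show ?thesis using h0 s(2) by (simp add: mult_le_0_iff zero_less_mult_iff)
qed

lemma depths_near_zero: "\<exists>e>0. {0<..<e} \<subseteq> depths c h b"
proof (cases "c > 0")
  case True
  define e where "e = min (min h (sqrt c)) (b/(4*h))"
  have "{0<..<e} \<subseteq> depths c h b"
  proof
    fix t assume "t \<in> {0<..<e}"
    then have t: "0 < t" "t \<le> h" "t < sqrt c" "t < b/(4*h)" unfolding e_def by auto
    have "t^2 < (sqrt c)^2" using t by (intro power_strict_mono) auto
    moreover have "parab h t \<le> 4*t*h" unfolding parab_def using t by (simp add: mult_left_mono)
    moreover have "4*t*h < b" using t(4) h0 by (simp add: field_simps)
    ultimately show "t \<in> depths c h b" using depth_if_parab_le t True by simp
  qed
  moreover have "e > 0" unfolding e_def using True h0 b0 by simp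
  ultimately show ?thesis by blast
next
  case False
  then have c: "c = 0" using c0 by simp
  define e where "e = min 1 (b*h/(2*h + 1)^2)"
  have "{0<..<e} \<subseteq> depths c h b"
  proof
    fix t assume "t \<in> {0<..<e}"
    then have t: "0 < t" "t < 1" "t < b*h/(2*h + 1)^2" unfolding e_def by auto
    have "\<bar>t - 2*h\<bar> \<le> 2*h + 1" using t h0 by linarith
    then have "(t - 2*h)^2 \<le> (2*h + 1)^2" by (metis abs_le_square_iff abs_of_nonneg h0 less_eq_real_def add_nonneg_nonneg mult_nonneg_nonneg zero_le_numeral zero_le_one)
    then have "t^2*(t - 2*h)^2 \<le> t^2*(2*h + 1)^2" by (rule mult_left_mono) simp
    also have "\<dots> = t*(t*(2*h + 1)^2)" by (simp add: power2_eq_square)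
    also have "t*(t*(2*h + 1)^2) < t*(b*h)" using t h0 by (simp add: field_simps)
    finally have "quartic c h b t < 0" unfolding quartic_def kappa_def c by (simp add: power2_eq_square algebra_simps)
    then show "t \<in> depths c h b" using depth_if_quartic_neg t by simp
  qed
  moreover have "e > 0" unfolding e_def using h0 b0 by simp
  ultimately show ?thesis by blast
qed

definition depth_bound :: real where "depth_bound = 2*h + b*h + 1 + c + 2*c/h"

lemma depths_less_bound:
  assumes Y: "t \<in> depths c h b" shows "t < depth_bound"
proof (rule ccontr)
  assume "\<not> t < depth_bound"
  then have t: "t \<ge> 1" "t \<ge> c + 1" "t - 2*h \<ge> b*h + 1" "t \<ge> 2*c/h"
    using c0 h0 b0 unfolding depth_bound_def by (smt (verit) divide_nonneg_pos mult_pos_pos)+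
  have "h*t \<ge> 2*c" using t(4) h0 by (simp add: field_simps)
  have "t^2 \<ge> c" using t(1,2) by (smt (verit) mult_le_cancel_left1 power2_eq_square)
  moreover have "iota c h t \<ge> 0"
  proof -
    have "iota c h t = t*(h*t - 2*c) + c*h" unfolding iota_def by algebra
    then show ?thesis using \<open>h*t \<ge> 2*c\<close> t c0 h0 by simp
  qed
  moreover have "quartic c h b t > 0"
  proof -
    have "kappa c h t = t*(t - 2*h) + c" unfolding kappa_def by algebra
    then have k: "kappa c h t \<ge> t*(b*h + 1)" using t c0 by (smt (verit) mult_left_mono)
    have p: "t*(b*h + 1) \<ge> 1" using t(1) h0 b0 by (smt (verit) mult_le_cancel_left1 mult_pos_pos)
    have "(kappa c h t)^2 \<ge> (t*(b*h + 1))^2" using k p by (simp add: power_mono)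
    also have "(t*(b*h + 1))^2 \<ge> t*(b*h + 1) * 1"
      unfolding power2_eq_square using p by (intro mult_left_mono) auto
    finally have "(kappa c h t)^2 \<ge> t*b*h + t" by (simp add: algebra_simps)
    moreover have "b*(h*t - c) \<le> t*b*h" using b0 c0 by (simp add: algebra_simps)
    ultimately show ?thesis unfolding quartic_def using t by linarith
  qed
  ultimately show False using quartic_nonpos_if_depth[OF Y] by simp
qed

lemma curve_witness_bounded:
  assumes t1: "t1 > 0"
  shows "\<exists>R. \<forall>s t. t1 \<le> t \<longrightarrow> s > 0 \<longrightarrow> curve c h b s t = 0 \<longrightarrow> s \<le> R"
proof (intro exI allI impI)
  define T where "T = depth_bound"
  define K where "K = T^2 + 2*h*T + c"
  fix s t assume t: "t1 \<le> t" and s: "s > 0" and F: "curve c h b s t = 0"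
  have tp: "t > 0" using t1 t by simp
  then have "t \<in> depths c h b" unfolding depths_def using s F by blast
  then have tT: "t < T" unfolding T_def by (rule depths_less_bound)
  then have tT2: "t^2 \<le> T^2" using tp by (intro power_mono) auto
  define k where "k = kappa c h t"
  have e: "t*((k - s)^2 + 4 * s*(t - h)^2) = b*(h * s + t*(h*t - c))"
    using F curve_sum_form[of c h b s t] unfolding k_def by simp
  have "t1*(k - s)^2 \<le> t*(k - s)^2" using t by (intro mult_right_mono) auto
  also have "\<dots> \<le> t*((k - s)^2 + 4 * s*(t - h)^2)" using tp s by (intro mult_left_mono) auto
  also have "\<dots> = b*h * s + b*h*t^2 - b*t*c" unfolding e by (simp add: algebra_simps power2_eq_square)
  also have "\<dots> \<le> b*h * s + b*h*T^2"
    using tT2 b0 h0 tp c0 by (smt (verit) mult_left_mono mult_nonneg_nonneg)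
  finally have "(k - s)^2 \<le> (b*h * s + b*h*T^2)/t1" using t1 by (simp add: field_simps)
  moreover have "k^2 \<le> K^2"
  proof -
    have "\<bar>k\<bar> \<le> t^2 + 2*h*t + c" unfolding k_def kappa_def using tp h0 c0 by (simp add: abs_le_iff)
    also have "\<dots> \<le> K" unfolding K_def using tT tT2 h0 by (smt (verit) mult_strict_left_mono)
    finally show ?thesis using power_mono[of "\<bar>k\<bar>" K 2] by simp
  qed
  moreover have "s^2 \<le> 2*(k - s)^2 + 2*k^2"
    using zero_le_power2[of "2*k - s"] by (simp add: power2_eq_square algebra_simps)
  ultimately have "s^2 \<le> 2*((b*h * s + b*h*T^2)/t1) + 2*K^2" by linarith
  also have "\<dots> = (2*b*h/t1) * s + (2*b*h*T^2/t1 + 2*K^2)" using t1 by (simp add: field_simps)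
  finally show "s \<le> 2*b*h/t1 + (2*b*h*T^2/t1 + 2*K^2) + 1"
    using b0 h0 t1 s by (intro quadratic_bound) simp_all
qed

lemma depth_iff_parab_le: "0 < t \<Longrightarrow> t \<le> h \<Longrightarrow> t^2 < c \<Longrightarrow> t \<in> depths c h b \<longleftrightarrow> parab h t \<le> b"
  using depth_if_parab_le parab_le_if_depth by blast

lemma quartic_eq_phi: "h*t - c \<noteq> 0 \<Longrightarrow> quartic c h b t = (h*t - c)*(phi c h t - b)"
  unfolding quartic_def phi_def by (simp add: field_simps)

lemma depth_if_phi_less:
  assumes "t > 0" "h*t - c > 0" "phi c h t < b" shows "t \<in> depths c h b"
  using assms quartic_eq_phi[of t] by (intro depth_if_quartic_neg) (simp_all add: mult_pos_neg)

lemma phi_le_if_depth: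
  assumes "t \<in> depths c h b" "t^2 \<ge> c" "iota c h t \<ge> 0" "h*t - c > 0" shows "phi c h t \<le> b"
  using quartic_nonpos_if_depth[OF assms(1-3)] quartic_eq_phi[of t] assms(4)
  by (simp add: mult_le_0_iff)

lemma phi_critical_if_double_root:
  assumes d: "2*kappa c h t*(2*t - 2*h) - b*h = 0" and q: "quartic c h b t = 0"
  shows "h*t - c > 0" "rho c h t = 0" "phi c h t = b"
proof -
  have e1: "(kappa c h t)^2 = b*(h*t - c)" using q unfolding quartic_def by simp
  have kn: "kappa c h t \<noteq> 0" using d b0 h0 by auto
  then have "(kappa c h t)^2 > 0" by simp
  then show p: "h*t - c > 0" using e1 b0 by (simp add: zero_less_mult_iff)
  have dd: "2*kappa c h t*(2*t - 2*h) = b*h" using d by simp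
  have "kappa c h t * rho c h t = (2*kappa c h t*(2*t - 2*h))*(h*t - c) - h*(kappa c h t)^2"
    unfolding rho_eq_kappa by (simp add: algebra_simps power2_eq_square)
  also have "\<dots> = b*h*(h*t - c) - h*(b*(h*t - c))" by (simp only: dd e1)
  also have "\<dots> = 0" by simp
  finally show "rho c h t = 0" using kn by simp
  show "phi c h t = b" unfolding phi_def using e1 p by simp
qed

lemma double_root_if_phi_critical:
  assumes p: "h*t - c > 0" and r: "rho c h t = 0" and ph: "phi c h t = b"
  shows "disc_q c b (2*h) = 0"
proof -
  have k2: "(kappa c h t)^2 = b*(h*t - c)" using ph p unfolding phi_def by (simp add: field_simps)
  then have q: "quartic c h b t = 0" unfolding quartic_def by simp
  have r': "2*(2*t - 2*h)*(h*t - c) = h*kappa c h t" using r unfolding rho_eq_kappa by simp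
  have "(2*kappa c h t*(2*t - 2*h) - b*h)*(h*t - c)
      = kappa c h t * (2*(2*t - 2*h)*(h*t - c)) - h*(b*(h*t - c))" by (simp add: algebra_simps)
  also have "\<dots> = kappa c h t * (h*kappa c h t) - h*(kappa c h t)^2" by (simp only: r' k2)
  also have "\<dots> = 0" by (simp add: power2_eq_square)
  finally have "(2*kappa c h t*(2*t - 2*h) - b*h)*(h*t - c) = 0" .
  then have "2*kappa c h t*(2*t - 2*h) - b*h = 0" using p by simp
  then have "monic_quartic_deriv (4*h) (2*c + 4*h^2) (2*h*(b/2 + 2*c)) (- t) = 0"
    using quartic_deriv_eq_monic_quartic_deriv[of c h t b] by simp
  moreover have "monic_quartic (4*h) (2*c + 4*h^2) (2*h*(b/2 + 2*c)) (c*(b + c)) (- t) = 0"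
    using q quartic_eq_monic_quartic by metis
  ultimately show ?thesis unfolding disc_q_eq_disc4 using disc4_zero_if_double_root by blast
qed

lemma iota_nonneg_beyond:
  assumes c_ge: "h^2 \<le> c" and t': "h < t'" "t' < x" "iota c h t' \<ge> 0" shows "iota c h x \<ge> 0"
proof -
  have "iota c h h = h*(h^2 - c)" unfolding iota_def by algebra
  then have "(x - t')*iota c h h \<le> 0" using c_ge h0 t' by (simp add: mult_nonneg_nonpos)
  moreover have "(x - h)*iota c h t' \<ge> 0" using t' by simp
  ultimately have "(t' - h)*iota c h x \<ge> 0" using iota_convex[OF t'(1,2) h0, of c] by linarith
  then show ?thesis using t' by (simp add: zero_le_mult_iff)
qed

lemma beyond_h_c_ge:
  assumes c_ge: "h^2 \<le> c" and x: "h < x" "iota c h x \<ge> 0" shows "h*x - c > 0" "x^2 \<ge> c"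
proof -
  have "c > 0" using c_ge h0 by (metis less_le_trans zero_less_power)
  show "x^2 \<ge> c"
  proof (rule ccontr)
    assume "\<not> x^2 \<ge> c"
    then have "x*(x^2 - c) < 0" using x h0 by (simp add: mult_pos_neg)
    moreover have "h*(x^2 + c) < x*(x^2 + c)"
      using x \<open>c > 0\<close> by (intro mult_strict_right_mono) (auto intro: add_nonneg_pos)
    moreover have "iota c h x = h*(x^2 + c) - 2*c*x" "x*(x^2 + c) - 2*c*x = x*(x^2 - c)"
      unfolding iota_def by algebra+
    ultimately show False using x by linarith
  qed
  show "h*x - c > 0"
  proof (rule ccontr)
    assume "\<not> h*x - c > 0"
    then have "h*x*x \<le> c*x" using x h0 by (intro mult_right_mono) auto
    then have "iota c h x \<le> c*(h - x)" unfolding iota_def by (simp add: power2_eq_square algebra_simps)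
    also have "\<dots> < 0" using \<open>c > 0\<close> x by (simp add: mult_pos_neg)
    finally show False using x by simp
  qed
qed

lemma phi_strict_mono_beyond_h_c_ge:
  assumes c_ge: "h^2 \<le> c" and t: "h < t'" "t' < t" "iota c h t' \<ge> 0"
  shows "phi c h t' < phi c h t"
proof (rule phi_less_if_deriv_pos[OF t(2) beyond_h_c_ge(1)[OF c_ge t(1,3)] h0])
  fix x assume x: "t' < x" "x < t"
  have "kappa c h x = (x - h)^2 + (c - h^2)" unfolding kappa_def by algebra
  moreover have "(x - h)^2 > 0" using x t by simp
  ultimately have kp: "kappa c h x > 0" using c_ge by linarith
  have iox: "iota c h x \<ge> 0" using iota_nonneg_beyond[OF c_ge t(1) _ t(3)] x by simp
  have "rho c h x > 0"
  proof (rule ccontr)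
    assume "\<not> rho c h x > 0"
    moreover have "rho c h x = 3*iota c h x + 2*x*(c - h^2)" unfolding rho_def iota_def by algebra
    moreover have "2*x*(c - h^2) \<ge> 0" using x t h0 c_ge by simp
    ultimately have "iota c h x = 0" "x*(c - h^2) = 0" using iox by linarith+
    then have "c = h^2" "iota c h x = 0" using x t h0 by auto
    moreover have "iota c h x = h*(x - h)^2" if "c = h^2" unfolding iota_def that by algebra
    ultimately show False using x t h0 by simp
  qed
  then show "kappa c h x * rho c h x > 0" using kp by simp
qed

lemma depths_tail_c_ge:
  assumes c_ge: "h^2 \<le> c" and t: "t \<in> depths c h b" "h < t'" "t' < t"
  shows "t' \<in> depths c h b"
proof (cases "iota c h t' < 0")
  case True
  have "t'*(t' - h) \<le> t*(t - h)" using t h0 by (intro mult_mono) auto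
  then have "(c - h^2)*(t'*(t' - h)) \<le> (c - h^2)*(t*(t - h))" using c_ge by (intro mult_left_mono) auto
  then have "4*(h^2 - c)*(t'*(h - t')) \<le> 4*(h^2 - c)*(t*(h - t))" by (simp add: algebra_simps)
  also have "\<dots> \<le> b*h^2" using weighted_parab_le_if_depth[OF t(1)] .
  finally show ?thesis using depth_if_iota_neg t True by simp
next
  case False
  then have io: "iota c h t' \<ge> 0" "iota c h t \<ge> 0" using iota_nonneg_beyond[OF c_ge t(2,3)] by simp_all
  have "phi c h t' < phi c h t" using phi_strict_mono_beyond_h_c_ge[OF c_ge t(2,3) io(1)] .
  also have "\<dots> \<le> b"
    using t(2,3) by (intro phi_le_if_depth[OF t(1) _ io(2)] beyond_h_c_ge[OF c_ge _ io(2)]) simp_all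
  finally show ?thesis using depth_if_phi_less beyond_h_c_ge[OF c_ge t(2) io(1)] t h0 by simp
qed

lemma depths_shape_c_ge:
  assumes c_ge: "h^2 \<le> c"
  shows "h^2 \<le> b \<Longrightarrow> convex_in (closure (depths c h b)) (depths c h b)"
    and "b < h^2 \<Longrightarrow> \<exists>!q. gap (closure (depths c h b)) (fst q) (snd q)"
proof -
  have iff: "t \<in> depths c h b \<longleftrightarrow> parab h t \<le> b" if "0 < t" "t < h" for t
  proof -
    have "t^2 < h^2" using that by (intro power_strict_mono) auto
    then show ?thesis using depth_iff_parab_le c_ge that by simp
  qed
  interpret unimodal_sublevel "depths c h b" "parab h" b "h/2" h
  proof
    show "strict_mono_on {0<..h/2} (parab h)"
      using parab_strict_mono_on by (rule monotone_on_subset) auto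
    show "strict_antimono_on {h/2..<h} (parab h)"
      using parab_strict_antimono_on by (rule monotone_on_subset) auto
  qed (use depths_pos h0 iff depths_tail_c_ge[OF c_ge] in auto)
  have peak: "parab h (h/2) = h^2" unfolding parab_def by (simp add: power2_eq_square)
  show "h^2 \<le> b \<Longrightarrow> convex_in (closure (depths c h b)) (depths c h b)"
    using gapless_if_peak_le peak by simp
  assume bh: "b < h^2"
  obtain e where e: "e > 0" "{0<..<e} \<subseteq> depths c h b" using depths_near_zero by blast
  have "min e (h/2) / 2 \<in> depths c h b" using e h0 by auto
  moreover have "min e (h/2) / 2 < h/2" using e h0 by auto
  ultimately have left: "\<exists>t\<in>depths c h b. t < h/2" by blast
  define t where "t = (h + sqrt (h^2 - b))/2"
  have "sqrt (h^2 - b) < sqrt (h^2)" using b0 by (intro real_sqrt_less_mono) simp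
  then have t: "h/2 < t" "t < h" unfolding t_def using bh h0 by auto
  have "2*t - h = sqrt (h^2 - b)" unfolding t_def by (simp add: field_simps)
  then have "parab h t = b" unfolding parab_eq using bh by simp
  then have "t \<in> depths c h b" using iff t h0 by simp
  then have right: "\<exists>t\<in>depths c h b. h/2 < t" using t by blast
  have cont: "isCont (parab h) (h/2)" unfolding parab_def[abs_def] by (intro continuous_intros)
  have "b < parab h (h/2)" using peak bh by simp
  from ex1_gap_if_peak_gt[OF this cont left right]
  show "\<exists>!q. gap (closure (depths c h b)) (fst q) (snd q)" .
qed

end

section \<open>The depths when \<open>c < h\<^sup>2\<close>\<close>

definition kappa_root :: "real \<Rightarrow> real \<Rightarrow> real" where
  "kappa_root c h = h + sqrt (h^2 - c)"

definition profile :: "real \<Rightarrow> real \<Rightarrow> real \<Rightarrow> real" where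
  "profile c h t = (if t \<le> sqrt c then parab h t else phi c h t)"

definition phi_max :: "real \<Rightarrow> real \<Rightarrow> real" where
  "phi_max c h = phi c h (rho_root2 c h)"

text \<open>The height of the hump of \<open>profile c h\<close> (of \<open>parab h\<close> when \<open>h\<^sup>2 \<le> c\<close>).\<close>

definition peak :: "real \<Rightarrow> real \<Rightarrow> real" where
  "peak c h = (if 4*c \<le> h^2 then phi_max c h else h^2)"

locale curve_setting_c_less = curve_setting +
  assumes c_less: "c < h^2"
begin

lemma sqrt_c_nonneg: "0 \<le> sqrt c"
  using c0 by simp

lemma sqrt_c_less_h: "sqrt c < h"
  using real_sqrt_less_mono[OF c_less] h0 by simp

lemma iota_nonneg: "iota c h t \<ge> 0"
proof -
  have "h*iota c h t = (h*t - c)^2 + c*(h^2 - c)" unfolding iota_def by algebra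
  moreover have "c*(h^2 - c) \<ge> 0" using c_less c0 by simp
  ultimately have "h*iota c h t \<ge> 0" by (metis add_nonneg_nonneg zero_le_power2)
  then show ?thesis using h0 by (simp add: zero_le_mult_iff)
qed

lemma beyond_sqrt_c:
  assumes "0 < t" "sqrt c \<le> t" shows "h*t - c > 0" "c \<le> t^2"
proof -
  have "(sqrt c)^2 \<le> t^2" using power_mono[OF assms(2) sqrt_c_nonneg, of 2] .
  then show "c \<le> t^2" using c0 by simp
  have "sqrt c * sqrt c \<le> sqrt c * t" using assms c0 by (intro mult_left_mono) auto
  also have "\<dots> < h * t" using sqrt_c_less_h assms by (intro mult_strict_right_mono) auto
  finally show "h*t - c > 0" using c0 by simp
qed

lemma below_sqrt_c: "0 < t \<Longrightarrow> t < sqrt c \<Longrightarrow> t^2 < c"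
  using power_strict_mono[of t "sqrt c" 2] c0 by simp

lemma profile_eq_phi:
  assumes "0 < t" "sqrt c \<le> t" shows "profile c h t = phi c h t"
proof (cases "t = sqrt c")
  case True
  then have "h * sqrt c - c \<noteq> 0" using beyond_sqrt_c(1)[OF assms] by simp
  then show ?thesis using True phi_sqrt_eq_parab c0 unfolding profile_def by simp
qed (use assms in \<open>simp add: profile_def\<close>)

lemma profile_eq_parab: "t \<le> sqrt c \<Longrightarrow> profile c h t = parab h t"
  unfolding profile_def by simp

lemma depth_if_profile_less:
  assumes t: "0 < t" and less: "profile c h t < b" shows "t \<in> depths c h b"
proof (cases "t < sqrt c")
  case True
  then have "t \<le> h" "t^2 < c" "parab h t < b"
    using sqrt_c_less_h below_sqrt_c t less unfolding profile_def by auto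
  then show ?thesis using depth_if_parab_le t by simp
next
  case False
  then show ?thesis using depth_if_phi_less beyond_sqrt_c profile_eq_phi t less by simp
qed

lemma profile_le_if_depth:
  assumes Y: "t \<in> depths c h b" shows "profile c h t \<le> b"
proof -
  have t: "0 < t" using Y depths_pos by auto
  show ?thesis
  proof (cases "t < sqrt c")
    case True
    then show ?thesis using parab_le_if_depth[OF Y] sqrt_c_less_h unfolding profile_def by simp
  next
    case False
    then show ?thesis
      using phi_le_if_depth[OF Y] beyond_sqrt_c iota_nonneg profile_eq_phi t by simp
  qed
qed

lemma h_less_kappa_root: "h < kappa_root c h"
  unfolding kappa_root_def using c_less by simp

lemma sqrt_c_less_kappa_root: "sqrt c < kappa_root c h"
  using sqrt_c_less_h h_less_kappa_root by simp

lemma kappa_kappa_root: "kappa c h (kappa_root c h) = 0"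
  unfolding kappa_eq kappa_root_def using c_less by simp

lemma kappa_factor: "kappa c h z = (z - kappa_root c h) * (z - c / kappa_root c h)"
proof -
  have ts: "kappa_root c h > 0" using h_less_kappa_root h0 by simp
  have rel: "kappa_root c h * (2*h - kappa_root c h) = c"
    unfolding kappa_root_def using c_less by (simp add: algebra_simps power2_eq_square)
  then have "c / kappa_root c h = 2*h - kappa_root c h" using ts by (simp add: field_simps)
  moreover have "(z - kappa_root c h) * (z - (2*h - kappa_root c h))
      = z^2 - 2*h*z + kappa_root c h * (2*h - kappa_root c h)" by algebra
  ultimately show ?thesis unfolding kappa_def rel by simp
qed

lemma kappa_neg:
  assumes x: "sqrt c < x" "x < kappa_root c h" shows "kappa c h x < 0"
proof -
  define e where "e = sqrt (h^2 - c)"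
  have e: "e > 0" "e^2 = h^2 - c" unfolding e_def using c_less by auto
  have "sqrt c * sqrt c \<le> h * sqrt c" using sqrt_c_less_h c0 by (intro mult_right_mono) auto
  moreover have "(h - sqrt c)^2 = h^2 - 2*h * sqrt c + c" using c0 by (simp add: power2_diff)
  ultimately have "(h - sqrt c)^2 \<le> e^2" using e c0 by (simp add: power2_eq_square)
  then have "h - sqrt c \<le> e" using e(1) by (simp add: power2_le_iff_abs_le)
  then have "\<bar>x - h\<bar> < e" using x unfolding kappa_root_def e_def by linarith
  then have "\<bar>x - h\<bar>^2 < e^2" by (intro power_strict_mono) auto
  then have "(x - h)^2 < e^2" by simp
  then show ?thesis unfolding kappa_eq using e by simp
qed

lemma kappa_pos:
  assumes "kappa_root c h < x" shows "kappa c h x > 0"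
proof -
  define e where "e = sqrt (h^2 - c)"
  have e: "e > 0" "e^2 = h^2 - c" unfolding e_def using c_less by auto
  have "e < x - h" using assms unfolding kappa_root_def e_def by simp
  then have "e^2 < (x - h)^2" using e(1) by (intro power_strict_mono) auto
  then show ?thesis unfolding kappa_eq using e by simp
qed

lemma rho_pos_beyond_kappa_root:
  assumes "kappa_root c h \<le> x" shows "rho c h x > 0"
proof -
  define e where "e = sqrt (h^2 - c)"
  have e: "e > 0" "c = h^2 - e^2" unfolding e_def using c_less by auto
  have "kappa_root c h = h + e" unfolding kappa_root_def e_def by simp
  then have "rho c h x = rho (h^2 - e^2) h (h + e + (x - kappa_root c h))" using e(2) by simp
  also have "\<dots> = 4*e^2*(h + e) + (6*h*e + 4*e^2)*(x - kappa_root c h) + 3*h*(x - kappa_root c h)^2"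
    by (rule rho_shifted)
  finally have "rho c h x = 4*e^2*(h + e) + (6*h*e + 4*e^2)*(x - kappa_root c h) + 3*h*(x - kappa_root c h)^2" .
  moreover have "4*e^2*(h + e) > 0" using e h0 by simp
  moreover have "(6*h*e + 4*e^2)*(x - kappa_root c h) \<ge> 0" using e h0 assms by simp
  moreover have "3*h*(x - kappa_root c h)^2 \<ge> 0" using h0 by simp
  ultimately show ?thesis by linarith
qed

lemma phi_strict_mono_on:
  assumes I: "\<And>x. x \<in> I \<Longrightarrow> 0 < x \<and> sqrt c \<le> x"
    and sign: "\<And>x y z. x \<in> I \<Longrightarrow> y \<in> I \<Longrightarrow> x < z \<Longrightarrow> z < y \<Longrightarrow> kappa c h z * rho c h z > 0"
  shows "strict_mono_on I (phi c h)"
proof (rule monotone_onI)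
  fix x y assume xy: "x \<in> I" "y \<in> I" "x < y"
  show "phi c h x < phi c h y"
  proof (rule phi_less_if_deriv_pos[OF \<open>x < y\<close> _ h0])
    show "h*x - c > 0" using beyond_sqrt_c I[OF \<open>x \<in> I\<close>] by blast
  qed (use sign xy in blast)
qed

lemma phi_strict_antimono_on:
  assumes I: "\<And>x. x \<in> I \<Longrightarrow> 0 < x \<and> sqrt c \<le> x"
    and sign: "\<And>x y z. x \<in> I \<Longrightarrow> y \<in> I \<Longrightarrow> x < z \<Longrightarrow> z < y \<Longrightarrow> kappa c h z * rho c h z < 0"
  shows "strict_antimono_on I (phi c h)"
proof (rule monotone_onI)
  fix x y assume xy: "x \<in> I" "y \<in> I" "x < y"
  show "phi c h y < phi c h x"
  proof (rule phi_less_if_deriv_neg[OF \<open>x < y\<close> _ h0])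
    show "h*x - c > 0" using beyond_sqrt_c I[OF \<open>x \<in> I\<close>] by blast
  qed (use sign xy in blast)
qed

lemma phi_strict_mono_beyond_kappa_root: "strict_mono_on {kappa_root c h..} (phi c h)"
proof (rule phi_strict_mono_on)
  fix x assume "x \<in> {kappa_root c h..}"
  then show "0 < x \<and> sqrt c \<le> x" using sqrt_c_less_kappa_root sqrt_c_nonneg by (simp only: atLeast_iff) linarith
next
  fix x y z assume "x \<in> {kappa_root c h..}" "x < z"
  then have "kappa c h z > 0" "rho c h z > 0" using kappa_pos rho_pos_beyond_kappa_root by auto
  then show "kappa c h z * rho c h z > 0" by simp
qed

lemma kappa_root_in_depths: "kappa_root c h \<in> depths c h b"
proof (rule depth_if_phi_less)
  show pos: "0 < kappa_root c h" using sqrt_c_less_kappa_root sqrt_c_nonneg by linarith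
  show "h * kappa_root c h - c > 0" using beyond_sqrt_c(1)[OF pos] sqrt_c_less_kappa_root by simp
  show "phi c h (kappa_root c h) < b" unfolding phi_def kappa_kappa_root using b0 by simp
qed

lemma depths_tail_beyond_kappa_root:
  assumes t: "t \<in> depths c h b" "kappa_root c h < t'" "t' < t" shows "t' \<in> depths c h b"
proof -
  have pos: "0 < t'" "sqrt c \<le> t'" using t(2) sqrt_c_less_kappa_root sqrt_c_nonneg by linarith+
  have "phi c h t' < phi c h t"
    using monotone_onD[OF phi_strict_mono_beyond_kappa_root, of t' t] t by auto
  also have "\<dots> \<le> b" using profile_le_if_depth[OF t(1)] profile_eq_phi pos t by simp
  finally show ?thesis using depth_if_phi_less beyond_sqrt_c pos by simp
qed

lemma isCont_profile:
  assumes "0 < x" shows "isCont (profile c h) x"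
proof -
  consider "x < sqrt c" | "x = sqrt c" | "sqrt c < x" by linarith
  then show ?thesis
  proof cases
    case 1
    have "\<forall>\<^sub>F y in nhds x. profile c h y = parab h y"
      using eventually_nhds_in_open[of "{..<sqrt c}" x] 1
      by (auto elim!: eventually_mono simp: profile_def)
    moreover have "isCont (parab h) x" unfolding parab_def[abs_def] by (intro continuous_intros)
    ultimately show ?thesis using isCont_cong by blast
  next
    case 3
    have "\<forall>\<^sub>F y in nhds x. profile c h y = phi c h y"
      using eventually_nhds_in_open[of "{sqrt c<..}" x] 3
      by (auto elim!: eventually_mono simp: profile_def)
    moreover have "h*x - c > 0" using beyond_sqrt_c(1)[OF assms] 3 by simp
    then have "isCont (phi c h) x" by (intro isCont_phi) simp
    ultimately show ?thesis using isCont_cong by blast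
  next
    case 2
    have "h*x - c > 0" using beyond_sqrt_c(1)[OF assms] 2 by simp
    then have "h * sqrt c - c \<noteq> 0" using 2 by simp
    then have "(phi c h \<longlongrightarrow> parab h (sqrt c)) (at_right (sqrt c))"
      using isCont_phi phi_sqrt_eq_parab c0 unfolding isCont_def
      by (metis tendsto_within_subset top_greatest)
    moreover have "continuous (at_left (sqrt c)) (parab h)"
      unfolding parab_def[abs_def] by (intro continuous_intros)
    ultimately have "isCont (\<lambda>t. if t \<le> sqrt c then parab h t else phi c h t) (sqrt c)"
      by (intro isCont_If_ge)
    then show ?thesis using 2 unfolding profile_def[abs_def] by simp
  qed
qed

lemma depths_shape_if_unimodal:
  assumes m: "0 < m" "m < kappa_root c h"
    and inc: "strict_mono_on {0<..m} (profile c h)"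
    and dec: "strict_antimono_on {m..<kappa_root c h} (profile c h)"
  shows "profile c h m \<le> b \<Longrightarrow> convex_in (closure (depths c h b)) (depths c h b)"
    and "b < profile c h m \<Longrightarrow> \<exists>!q. gap (closure (depths c h b)) (fst q) (snd q)"
proof -
  interpret unimodal_sublevel "depths c h b" "profile c h" b m "kappa_root c h"
    using depths_pos m inc dec depth_if_profile_less profile_le_if_depth depths_tail_beyond_kappa_root
    by unfold_locales auto
  show "profile c h m \<le> b \<Longrightarrow> convex_in (closure (depths c h b)) (depths c h b)"
    by (rule gapless_if_peak_le)
  assume peak: "b < profile c h m"
  obtain e where e: "e > 0" "{0<..<e} \<subseteq> depths c h b" using depths_near_zero by blast
  have "min e m / 2 \<in> depths c h b" "min e m / 2 < m" using e m by auto
  then have left: "\<exists>t\<in>depths c h b. t < m" by blast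
  have right: "\<exists>t\<in>depths c h b. m < t" using kappa_root_in_depths m by blast
  from ex1_gap_if_peak_gt[OF peak isCont_profile[OF m(1)] left right]
  show "\<exists>!q. gap (closure (depths c h b)) (fst q) (snd q)" .
qed

lemma rho_pos_if_sq_less: "h^2 < 4*c \<Longrightarrow> rho c h x > 0"
proof -
  assume "h^2 < 4*c"
  then have "4*(h^2 - c)*(h^2 - 4*c) < 0" using c_less by (simp add: mult_pos_neg)
  moreover have "(6*h*x - 4*c - 2*h^2)^2 \<ge> 0" by simp
  ultimately have "12*h*rho c h x > 0" unfolding rho_completed_square by linarith
  then show ?thesis using h0 by (simp add: zero_less_mult_iff)
qed

lemma phi_strict_antimono_upto_kappa_root:
  assumes a: "0 < a" "sqrt c \<le> a" and rho: "\<And>z. a < z \<Longrightarrow> z < kappa_root c h \<Longrightarrow> rho c h z > 0"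
  shows "strict_antimono_on {a..<kappa_root c h} (phi c h)"
proof (rule phi_strict_antimono_on)
  fix x y z assume "x \<in> {a..<kappa_root c h}" "y \<in> {a..<kappa_root c h}" "x < z" "z < y"
  then have z: "a < z" "z < kappa_root c h" by auto
  then have "kappa c h z < 0" using kappa_neg a by simp
  then show "kappa c h z * rho c h z < 0" using rho[OF z] by (simp add: mult_neg_pos)
qed (use a in auto)

lemma profile_strict_mono_upto:
  assumes "a \<le> h/2" "a \<le> sqrt c" shows "strict_mono_on {0<..a} (profile c h)"
proof -
  have "strict_mono_on {0<..a} (parab h)"
    using parab_strict_mono_on[of h] by (rule monotone_on_subset) (use assms in auto)
  then show ?thesis by (rule monotone_on_eqI) (use assms in \<open>auto intro!: profile_eq_parab\<close>)
qed

lemma profile_unimodal_at_half: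
  assumes c4: "h^2 < 4*c"
  shows "strict_mono_on {0<..h/2} (profile c h)"
    and "strict_antimono_on {h/2..<kappa_root c h} (profile c h)"
    and "profile c h (h/2) = h^2"
proof -
  have "h^2 > 0" using h0 by simp
  then have cp: "c > 0" using c4 by linarith
  have hc: "h/2 < sqrt c" using real_sqrt_less_mono[OF c4] h0 by (simp add: real_sqrt_mult)
  show "strict_mono_on {0<..h/2} (profile c h)" using hc by (intro profile_strict_mono_upto) auto
  show "profile c h (h/2) = h^2" using hc by (simp add: profile_def parab_def power2_eq_square)
  have "strict_antimono_on {h/2..sqrt c} (parab h)"
    using parab_strict_antimono_on by (rule monotone_on_subset) auto
  then have left: "strict_antimono_on {h/2..sqrt c} (profile c h)"
    by (rule monotone_on_eqI) (auto intro!: profile_eq_parab)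
  have phi_dec: "strict_antimono_on {sqrt c..<kappa_root c h} (phi c h)"
    using cp rho_pos_if_sq_less[OF c4] by (intro phi_strict_antimono_upto_kappa_root) auto
  have "strict_antimono_on {sqrt c<..<kappa_root c h} (phi c h)"
    using phi_dec by (rule monotone_on_subset) auto
  then have right: "strict_antimono_on {sqrt c<..<kappa_root c h} (profile c h)"
    by (rule monotone_on_eqI) (simp add: profile_def)
  have "strict_antimono_on ({h/2..sqrt c} \<union> {sqrt c<..<kappa_root c h}) (profile c h)"
  proof (rule strict_antimono_on_Un[OF left right])
    fix x y assume x: "x \<in> {h/2..sqrt c}" and y: "y \<in> {sqrt c<..<kappa_root c h}"
    have "phi c h y < phi c h (sqrt c)" using monotone_onD[OF phi_dec, of "sqrt c" y] y by auto
    also have "phi c h (sqrt c) = parab h (sqrt c)"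
      using beyond_sqrt_c(1)[of "sqrt c"] cp by (intro phi_sqrt_eq_parab) auto
    also have "\<dots> \<le> parab h x"
      using monotone_onD[OF parab_strict_antimono_on[of h], of x "sqrt c"] x by (cases "x = sqrt c") auto
    finally show "x < y \<and> profile c h y < profile c h x"
      using x y by (simp add: profile_def)
  qed
  moreover have "{h/2..<kappa_root c h} = {h/2..sqrt c} \<union> {sqrt c<..<kappa_root c h}"
    using hc sqrt_c_less_kappa_root by auto
  ultimately show "strict_antimono_on {h/2..<kappa_root c h} (profile c h)" by simp
qed

lemma profile_strict_mono_upto_rho_root2:
  assumes c4: "4*c \<le> h^2" shows "strict_mono_on {0<..rho_root2 c h} (profile c h)"
proof -
  define r1 r2 where "r1 = rho_root1 c h" and "r2 = rho_root2 c h"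
  have r: "r1 \<le> sqrt c" "sqrt c \<le> r2" "r2 \<le> h"
    using rho_roots_bounds[OF h0 c0 c4] unfolding r1_def r2_def by auto
  have rho: "rho c h x = 3*h*((x - r1)*(x - r2))" for x
    using rho_factor[OF h0 c0 c4] unfolding r1_def r2_def by (simp add: mult.assoc)
  have hc: "sqrt c \<le> h/2" using real_sqrt_le_mono[OF c4] h0 by (simp add: real_sqrt_mult)
  have left: "strict_mono_on {0<..sqrt c} (profile c h)" using hc by (intro profile_strict_mono_upto) auto
  have phi_inc: "strict_mono_on ({sqrt c..r2} \<inter> {0<..}) (phi c h)"
  proof (rule phi_strict_mono_on)
    fix x y z assume "x \<in> {sqrt c..r2} \<inter> {0<..}" "y \<in> {sqrt c..r2} \<inter> {0<..}" "x < z" "z < y"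
    then have z: "sqrt c < z" "z < r2" by auto
    then have "kappa c h z < 0" using kappa_neg r h_less_kappa_root by simp
    moreover have "(z - r1)*(z - r2) < 0" using z r by (simp add: mult_pos_neg)
    then have "rho c h z < 0" unfolding rho using h0 by (simp add: mult_pos_neg)
    ultimately show "kappa c h z * rho c h z > 0" by (simp add: mult_neg_neg)
  qed auto
  have "{sqrt c<..r2} \<subseteq> {sqrt c..r2} \<inter> {0<..}"
    using sqrt_c_nonneg by (auto simp del: real_sqrt_ge_0_iff)
  then have "strict_mono_on {sqrt c<..r2} (phi c h)" by (rule monotone_on_subset[OF phi_inc])
  then have right: "strict_mono_on {sqrt c<..r2} (profile c h)"
    by (rule monotone_on_eqI) (simp add: profile_def)
  have "strict_mono_on ({0<..sqrt c} \<union> {sqrt c<..r2}) (profile c h)"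
  proof (rule strict_mono_on_Un[OF left right])
    fix x y assume x: "x \<in> {0<..sqrt c}" and y: "y \<in> {sqrt c<..r2}"
    then have "0 < sqrt c" by (simp only: greaterThanAtMost_iff) linarith
    then have "h * sqrt c - c \<noteq> 0" using beyond_sqrt_c(1)[of "sqrt c"] by simp
    have "parab h x \<le> parab h (sqrt c)"
      using monotone_onD[OF parab_strict_mono_on[of h], of x "sqrt c"] x hc by (cases "x = sqrt c") auto
    also have "\<dots> = phi c h (sqrt c)" using phi_sqrt_eq_parab \<open>h * sqrt c - c \<noteq> 0\<close> c0 by simp
    also have "\<dots> < phi c h y" using monotone_onD[OF phi_inc, of "sqrt c" y] y \<open>0 < sqrt c\<close> by auto
    finally show "x < y \<and> profile c h x < profile c h y" using x y by (simp add: profile_def)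
  qed
  moreover have "{0<..sqrt c} \<union> {sqrt c<..r2} = {0<..r2}"
    using r(2) sqrt_c_nonneg by (auto simp del: real_sqrt_ge_0_iff)
  ultimately show ?thesis unfolding r2_def by simp
qed

lemma profile_unimodal_at_rho_root2:
  assumes c4: "4*c \<le> h^2"
  shows "0 < rho_root2 c h" and "rho_root2 c h < kappa_root c h"
    and "strict_mono_on {0<..rho_root2 c h} (profile c h)"
    and "strict_antimono_on {rho_root2 c h..<kappa_root c h} (profile c h)"
    and "profile c h (rho_root2 c h) = phi_max c h"
proof -
  have r: "sqrt c \<le> rho_root2 c h" "rho_root2 c h \<le> h" "0 < rho_root2 c h"
    "rho_root1 c h \<le> sqrt c" using rho_roots_bounds[OF h0 c0 c4] by auto
  show "0 < rho_root2 c h" "rho_root2 c h < kappa_root c h" using r h_less_kappa_root by auto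
  show "profile c h (rho_root2 c h) = phi_max c h" using profile_eq_phi r unfolding phi_max_def by simp
  show "strict_mono_on {0<..rho_root2 c h} (profile c h)" using profile_strict_mono_upto_rho_root2[OF c4] .
  have "rho c h z > 0" if "rho_root2 c h < z" for z
    using rho_factor[OF h0 c0 c4, of z] that r h0 by simp
  then have "strict_antimono_on {rho_root2 c h..<kappa_root c h} (phi c h)"
    using r by (intro phi_strict_antimono_upto_kappa_root) auto
  then show "strict_antimono_on {rho_root2 c h..<kappa_root c h} (profile c h)"
    by (rule monotone_on_eqI) (use profile_eq_phi r in auto)
qed

lemma phi_le_phi_max:
  assumes c4: "4*c \<le> h^2" and t: "0 < t" "sqrt c \<le> t" "t \<le> kappa_root c h"
  shows "phi c h t \<le> phi_max c h"
proof -
  note shape = profile_unimodal_at_rho_root2[OF c4]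
  have "h * rho_root2 c h - c > 0" using beyond_sqrt_c(1) rho_roots_bounds[OF h0 c0 c4] by simp
  then have "phi_max c h \<ge> 0" unfolding phi_max_def phi_def by simp
  moreover have "phi c h t \<le> phi_max c h" if "t < kappa_root c h"
  proof (cases "t \<le> rho_root2 c h")
    case True
    then have "profile c h t \<le> profile c h (rho_root2 c h)"
      using monotone_onD[OF shape(3), of t "rho_root2 c h"] t shape(1) by (cases "t = rho_root2 c h") auto
    then show ?thesis using profile_eq_phi t shape(5) by simp
  next
    case False
    then have "profile c h t < profile c h (rho_root2 c h)"
      using monotone_onD[OF shape(4), of "rho_root2 c h" t] that by auto
    then show ?thesis using profile_eq_phi t shape(5) by simp
  qed
  moreover have "phi c h (kappa_root c h) = 0" unfolding phi_def kappa_kappa_root by simp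
  ultimately show ?thesis using t(3) by (cases "t = kappa_root c h") auto
qed

lemma sq_le_phi_max:
  assumes c4: "4*c \<le> h^2" shows "h^2 \<le> phi_max c h"
proof -
  have hc: "sqrt c \<le> h/2" using real_sqrt_le_mono[OF c4] h0 by (simp add: real_sqrt_mult)
  have "h^2 = parab h (h/2)" unfolding parab_def by (simp add: power2_eq_square)
  also have "\<dots> \<le> phi c h (h/2)" using beyond_sqrt_c(1)[of "h/2"] hc h0 by (intro parab_le_phi) auto
  also have "\<dots> \<le> phi_max c h" using phi_le_phi_max[OF c4] hc h0 h_less_kappa_root by simp
  finally show ?thesis .
qed

lemma quartic_two_roots:
  obtains a a' where "a \<noteq> a'" "quartic c h b a = 0" "quartic c h b a' = 0"
proof -
  define ts where "ts = kappa_root c h"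
  have ts: "0 < ts" "h*ts - c > 0"
    using h_less_kappa_root h0 beyond_sqrt_c(1) sqrt_c_less_kappa_root unfolding ts_def by auto
  have q_ts: "quartic c h b ts < 0"
    unfolding quartic_def ts_def kappa_kappa_root using ts b0 by (simp add: ts_def)
  have cont: "isCont (quartic c h b) x" for x unfolding quartic_def kappa_def by (intro continuous_intros)
  have "c < h*ts" using ts by simp
  then have "c/h < ts" using h0 by (simp add: divide_less_eq mult.commute)
  moreover have "quartic c h b (c/h) \<ge> 0" unfolding quartic_def using h0 by simp
  ultimately obtain a where a: "a \<le> ts" "quartic c h b a = 0"
    using IVT2[of "quartic c h b" ts 0 "c/h"] q_ts cont by fastforce
  have "ts < depth_bound" using depths_less_bound kappa_root_in_depths unfolding ts_def .
  moreover have "quartic c h b depth_bound \<ge> 0"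
    using depth_if_quartic_neg[of depth_bound] depths_less_bound ts calculation by force
  ultimately obtain a' where a': "ts \<le> a'" "quartic c h b a' = 0"
    using IVT[of "quartic c h b" ts 0 depth_bound] q_ts cont by fastforce
  have "a \<noteq> a'" using a a' q_ts by auto
  then show ?thesis using that a(2) a'(2) by blast
qed

lemma phi_critical_if_disc_q_zero:
  assumes dz: "disc_q c b (2*h) = 0"
  obtains e where "h*e - c > 0" "rho c h e = 0" "phi c h e = b"
proof -
  obtain a a' where a: "a \<noteq> a'" "quartic c h b a = 0" "quartic c h b a' = 0"
    by (rule quartic_two_roots)
  then have "- a \<noteq> - a'" by simp
  from double_root_if_disc4_zero[OF a(2)[unfolded quartic_eq_monic_quartic]
      a(3)[unfolded quartic_eq_monic_quartic] this dz[unfolded disc_q_eq_disc4]]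
  obtain m where m: "monic_quartic (4*h) (2*c + 4*h^2) (2*h*(b/2 + 2*c)) (c*(b + c)) m = 0"
      "monic_quartic_deriv (4*h) (2*c + 4*h^2) (2*h*(b/2 + 2*c)) m = 0"
    by blast
  have "2*kappa c h (- m)*(2*(- m) - 2*h) - b*h = 0" "quartic c h b (- m) = 0"
    using m quartic_eq_monic_quartic[of c h b "- m"] quartic_deriv_eq_monic_quartic_deriv[of c h "- m" b]
    by simp_all
  then show ?thesis using phi_critical_if_double_root that by blast
qed

lemma sq_le_if_rho_zero: "rho c h e = 0 \<Longrightarrow> 4*c \<le> h^2"
  using rho_pos_if_sq_less[of e] by force

lemma phi_rho_root1_less:
  assumes c4: "4*c \<le> h^2" and cp: "c > 0" and r12: "rho_root1 c h < rho_root2 c h"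
    and pos: "h * rho_root1 c h - c > 0"
  shows "phi c h (rho_root1 c h) < h^2"
proof -
  define r1 r2 ts where "r1 = rho_root1 c h" and "r2 = rho_root2 c h" and "ts = kappa_root c h"
  have r: "r1 \<le> sqrt c" "sqrt c \<le> r2" "r2 \<le> h" "r1 * r2 = c" "r1 < r2"
    using rho_roots_bounds[OF h0 c0 c4] rho_roots_prod[OF h0 c0 c4] r12 unfolding r1_def r2_def by auto
  have rho: "rho c h x = 3*h*((x - r1)*(x - r2))" for x
    using rho_factor[OF h0 c0 c4] unfolding r1_def r2_def by (simp add: mult.assoc)
  have "r1 < sqrt c"
  proof (rule ccontr)
    assume "\<not> r1 < sqrt c"
    then have "sqrt c * sqrt c < r1 * r2" using r cp by (intro mult_le_less_imp_less) auto
    then show False using r cp by simp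
  qed
  have "h * r1 > 0" using pos cp unfolding r1_def by linarith
  then have "0 < r1" using h0 by (simp add: zero_less_mult_iff)
  then have "r1 * r2 < r1 * ts" using r h_less_kappa_root unfolding ts_def by (intro mult_strict_left_mono) auto
  then have "c / ts < r1" using r h_less_kappa_root h0 unfolding ts_def by (simp add: divide_less_eq mult.commute)
  have "phi c h r1 < phi c h (sqrt c)"
  proof (rule phi_less_if_deriv_pos[OF \<open>r1 < sqrt c\<close> pos[folded r1_def] h0])
    fix z assume z: "r1 < z" "z < sqrt c"
    have "kappa c h z < 0" unfolding kappa_factor ts_def[symmetric]
      using z \<open>c / ts < r1\<close> sqrt_c_less_kappa_root unfolding ts_def by (simp add: mult_neg_pos)
    moreover have "rho c h z < 0" unfolding rho using z r h0 by (simp add: mult_pos_neg)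
    ultimately show "kappa c h z * rho c h z > 0" by (simp add: mult_neg_neg)
  qed
  also have "\<dots> = parab h (sqrt c)"
    using beyond_sqrt_c(1)[of "sqrt c"] cp by (intro phi_sqrt_eq_parab) auto
  also have "\<dots> \<le> h^2" by (rule parab_le)
  finally show ?thesis unfolding r1_def .
qed

lemma phi_max_if_disc_q_zero:
  assumes cp: "c > 0" and hb: "h^2 \<le> b" and dz: "disc_q c b (2*h) = 0"
  shows "4*c \<le> h^2" "phi_max c h = b"
proof -
  obtain e where e: "h*e - c > 0" "rho c h e = 0" "phi c h e = b"
    using phi_critical_if_disc_q_zero[OF dz] by blast
  show c4: "4*c \<le> h^2" using sq_le_if_rho_zero[OF e(2)] .
  have "e = rho_root1 c h \<or> e = rho_root2 c h" using rho_factor[OF h0 c0 c4, of e] e(2) h0 by simp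
  moreover have "rho_root1 c h \<le> rho_root2 c h" using rho_roots_bounds[OF h0 c0 c4] by linarith
  moreover have "\<not> (e = rho_root1 c h \<and> rho_root1 c h < rho_root2 c h)"
    using phi_rho_root1_less[OF c4 cp] e hb by fastforce
  ultimately have "e = rho_root2 c h" by fastforce
  then show "phi_max c h = b" using e(3) unfolding phi_max_def by simp
qed

lemma disc_q_zero_if_phi_max:
  assumes c4: "4*c \<le> h^2" and M: "phi_max c h = b" shows "disc_q c b (2*h) = 0"
proof (rule double_root_if_phi_critical)
  have r: "sqrt c \<le> rho_root2 c h" "0 < rho_root2 c h" using rho_roots_bounds[OF h0 c0 c4] by auto
  show "h * rho_root2 c h - c > 0" using beyond_sqrt_c(1)[OF r(2,1)] .
  show "rho c h (rho_root2 c h) = 0" using rho_factor[OF h0 c0 c4] by simp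
  show "phi c h (rho_root2 c h) = b" using M unfolding phi_max_def .
qed

end

context curve_setting begin

lemma depths_shape:
  shows "peak c h \<le> b \<Longrightarrow> convex_in (closure (depths c h b)) (depths c h b)"
    and "b < peak c h \<Longrightarrow> \<exists>!q. gap (closure (depths c h b)) (fst q) (snd q)"
proof -
  have "h^2 > 0" using h0 by simp
  consider (large_c) "h^2 \<le> c" | (medium_c) "c < h^2" "h^2 < 4*c" | (small_c) "4*c \<le> h^2"
    by linarith
  then have "(peak c h \<le> b \<longrightarrow> convex_in (closure (depths c h b)) (depths c h b))
    \<and> (b < peak c h \<longrightarrow> (\<exists>!q. gap (closure (depths c h b)) (fst q) (snd q)))"
  proof cases
    case large_c
    then have "\<not> 4*c \<le> h^2" using \<open>h^2 > 0\<close> by linarith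
    then have "peak c h = h^2" unfolding peak_def by simp
    then show ?thesis using depths_shape_c_ge[OF large_c] by simp
  next
    case medium_c
    interpret curve_setting_c_less c h b by unfold_locales (use medium_c in simp)
    have "0 < h/2" "h/2 < kappa_root c h" using h0 h_less_kappa_root by auto
    note shape = depths_shape_if_unimodal[OF this profile_unimodal_at_half(1,2)[OF medium_c(2)]]
    have "peak c h = h^2" unfolding peak_def using medium_c by auto
    then show ?thesis using shape profile_unimodal_at_half(3)[OF medium_c(2)] by simp
  next
    case small_c
    interpret curve_setting_c_less c h b by unfold_locales (use small_c c0 \<open>h^2 > 0\<close> in linarith)
    note shape = depths_shape_if_unimodal[OF profile_unimodal_at_rho_root2(1-4)[OF small_c]]
    have "peak c h = phi_max c h" unfolding peak_def using small_c by auto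
    then show ?thesis using shape profile_unimodal_at_rho_root2(5)[OF small_c] by simp
  qed
  then show "peak c h \<le> b \<Longrightarrow> convex_in (closure (depths c h b)) (depths c h b)"
    and "b < peak c h \<Longrightarrow> \<exists>!q. gap (closure (depths c h b)) (fst q) (snd q)" by blast+
qed

end

section \<open>The set W off the imaginary axis\<close>

definition qfactor :: "real \<Rightarrow> real \<Rightarrow> complex \<Rightarrow> complex" where
  "qfactor c d w = of_real c - \<i> * of_real d * w - w^2"

lemma qfactor_eq: "qfactor c d w = (csqrt (of_real (c - d^2/4)))^2 - (w + \<i> * of_real (d/2))^2"
proof -
  have "(csqrt (of_real (c - d^2/4)))^2 = of_real c - (of_real d)^2/4"
    by (simp add: power2_csqrt)
  moreover have "(w + \<i> * of_real (d/2))^2 = w^2 + \<i> * of_real d * w - (of_real d)^2/4"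
    by (simp add: power2_eq_square field_simps)
  ultimately show ?thesis unfolding qfactor_def by simp
qed

lemma qfactor_eq_0_iff: "qfactor c d w = 0 \<longleftrightarrow> w = delta_p c d \<or> w = delta_m c d"
proof -
  define r where "r = csqrt (of_real (c - d^2/4))"
  define z where "z = w + \<i> * of_real (d/2)"
  have "qfactor c d w = (r - z)*(r + z)"
    unfolding qfactor_eq r_def z_def by (simp add: power2_eq_square algebra_simps)
  then have "qfactor c d w = 0 \<longleftrightarrow> z = r \<or> z = -r" by (auto simp: eq_neg_iff_add_eq_0 add.commute)
  then show ?thesis unfolding z_def r_def delta_p_def delta_m_def by (auto simp: algebra_simps)
qed

lemma Re_qfactor: "Re (qfactor c d w) = c + d * Im w - (Re w)^2 + (Im w)^2"
  unfolding qfactor_def by (simp add: power2_eq_square)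

lemma Im_qfactor: "Im (qfactor c d w) = - d * Re w - 2 * Re w * Im w"
  unfolding qfactor_def by (simp add: power2_eq_square)

lemma pab_eq: "pab c d \<alpha> \<beta> w = (of_real \<alpha> - w^2) * qfactor c d w - of_real \<beta> * w^2"
  unfolding pab_def qfactor_def ..

lemma pab_cross:
  "Re (pab c d \<alpha> \<beta> w) * Im (qfactor c d w) - Im (pab c d \<alpha> \<beta> w) * Re (qfactor c d w)
     = - 2 * Re w * curve c (d/2) \<beta> ((Re w)^2) (- Im w)"
proof -
  obtain x y where w: "w = Complex x y" by (rule complex.exhaust)
  define h where "h = d/2"
  have d: "d = 2*h" unfolding h_def by simp
  have re: "Re (pab c d \<alpha> \<beta> w)
      = (\<alpha> - (x^2 - y^2))*(c + 2*h*y - x^2 + y^2) + (2*x*y)*(-2*h*x - 2*x*y) - \<beta>*(x^2 - y^2)"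
    and im: "Im (pab c d \<alpha> \<beta> w)
      = (\<alpha> - (x^2 - y^2))*(-2*h*x - 2*x*y) - (2*x*y)*(c + 2*h*y - x^2 + y^2) - \<beta>*(2*x*y)"
    unfolding pab_def w d by (simp_all add: power2_eq_square algebra_simps)
  have qre: "Re (qfactor c d w) = c + 2*h*y - x^2 + y^2" and qim: "Im (qfactor c d w) = -2*h*x - 2*x*y"
    unfolding Re_qfactor Im_qfactor w d by simp_all
  show ?thesis
    unfolding re im qre qim h_def[symmetric] unfolding w curve_def kappa_def by simp algebra
qed

lemma pab_affine: "pab c d \<alpha> \<beta> w = of_real \<alpha> * qfactor c d w + pab c d 0 \<beta> w"
  unfolding pab_eq by (simp add: algebra_simps)

lemma curve_if_W_beta:
  assumes x: "Re w \<noteq> 0" and w: "w \<in> W_beta c d \<beta>"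
  shows "curve c (d/2) \<beta> ((Re w)^2) (- Im w) = 0"
proof -
  consider \<alpha> where "pab c d \<alpha> \<beta> w = 0" | "qfactor c d w = 0"
    using w unfolding W_beta_def qfactor_eq_0_iff by blast
  then have "- 2 * Re w * curve c (d/2) \<beta> ((Re w)^2) (- Im w) = 0"
  proof cases
    case (1 \<alpha>) then show ?thesis using pab_cross[of c d \<alpha> \<beta> w] by simp
  next
    case 2 then show ?thesis using pab_cross[of c d 0 \<beta> w] by simp
  qed
  then show ?thesis using x by simp
qed

lemma W_beta_if_curve:
  assumes x: "Re w \<noteq> 0" and F: "curve c (d/2) \<beta> ((Re w)^2) (- Im w) = 0"
  shows "w \<in> W_beta c d \<beta>"
proof (cases "qfactor c d w = 0")
  case True
  then show ?thesis unfolding W_beta_def qfactor_eq_0_iff by blast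
next
  case False
  have "Re (pab c d 0 \<beta> w) * Im (qfactor c d w) = Im (pab c d 0 \<beta> w) * Re (qfactor c d w)"
    using pab_cross[of c d 0 \<beta> w] F by simp
  then obtain \<alpha> where "of_real \<alpha> * qfactor c d w + pab c d 0 \<beta> w = 0"
    using affine_real_root[OF False] by blast
  then have "pab c d \<alpha> \<beta> w = 0" unfolding pab_affine[of c d \<alpha>] .
  then show ?thesis unfolding W_beta_def by blast
qed

lemma W_beta_off_axis_iff:
  "Re w \<noteq> 0 \<Longrightarrow> w \<in> W_beta c d \<beta> \<longleftrightarrow> curve c (d/2) \<beta> ((Re w)^2) (- Im w) = 0"
  using curve_if_W_beta W_beta_if_curve by blast

lemma depth_if_W_off_axis:
  assumes "c \<ge> 0" "d > 0" "\<beta> > 0" and w: "w \<in> W_beta c d \<beta>" "Re w \<noteq> 0"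
  shows "- Im w \<in> depths c (d/2) \<beta>"
proof -
  interpret curve_setting c "d/2" \<beta> using assms by unfold_locales auto
  have "(Re w)^2 > 0" "curve c (d/2) \<beta> ((Re w)^2) (- Im w) = 0"
    using w W_beta_off_axis_iff by auto
  then show ?thesis unfolding depths_def using pos_if_curve_root by blast
qed

lemma Im_Gamma_beta:
  assumes "c \<ge> 0" "d > 0" "\<beta> > 0" and w: "w \<in> Gamma_beta c d \<beta>"
  shows "- Im w \<in> closure (depths c (d/2) \<beta>)"
proof -
  have "closed ((\<lambda>w. - Im w) -` closure (depths c (d/2) \<beta>))"
    by (rule continuous_closed_vimage) (auto intro!: continuous_intros)
  moreover have "{w \<in> W_beta c d \<beta>. Re w \<noteq> 0} \<subseteq> (\<lambda>w. - Im w) -` closure (depths c (d/2) \<beta>)"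
  proof
    fix w assume "w \<in> {w \<in> W_beta c d \<beta>. Re w \<noteq> 0}"
    then have "- Im w \<in> depths c (d/2) \<beta>" using depth_if_W_off_axis[OF assms(1-3)] by blast
    then show "w \<in> (\<lambda>w. - Im w) -` closure (depths c (d/2) \<beta>)" using closure_subset by auto
  qed
  ultimately have "Gamma_beta c d \<beta> \<subseteq> (\<lambda>w. - Im w) -` closure (depths c (d/2) \<beta>)"
    unfolding Gamma_beta_def by (intro closure_minimal)
  then show ?thesis using w by blast
qed

lemma closed_neg_Im_image:
  fixes G :: "complex set"
  assumes "closed G" shows "closed ((\<lambda>w. - Im w) ` (G \<inter> cball 0 r \<inter> {w. Im w \<le> a}))"
proof -
  have "closed {w. Im w \<le> a}" using closed_halfspace_Im_le[of a] by (simp add: Collect_mono)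
  moreover have "compact (G \<inter> cball 0 r)" using assms by (intro closed_Int_compact) simp_all
  ultimately have "compact (G \<inter> cball 0 r \<inter> {w. Im w \<le> a})" by (rule compact_Int_closed[rotated])
  moreover have "continuous_on (G \<inter> cball 0 r \<inter> {w. Im w \<le> a}) (\<lambda>w. - Im w)"
    by (intro continuous_intros)
  ultimately show ?thesis using compact_continuous_image compact_imp_closed by blast
qed

lemma Gamma_beta_point:
  assumes "s > 0" "curve c (d/2) \<beta> s t = 0" shows "Complex (sqrt s) (- t) \<in> Gamma_beta c d \<beta>"
proof -
  have "Complex (sqrt s) (- t) \<in> {w \<in> W_beta c d \<beta>. Re w \<noteq> 0}"
    using assms W_beta_if_curve[of "Complex (sqrt s) (- t)"] by simp
  then show ?thesis unfolding Gamma_beta_def using closure_subset by (rule rev_subsetD)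
qed

lemma Gamma_beta_attains_depth:
  assumes c0: "c \<ge> 0" and d0: "d > 0" and b0: "\<beta> > 0"
    and t: "t \<in> closure (depths c (d/2) \<beta>)" "t > 0"
  shows "\<exists>w\<in>Gamma_beta c d \<beta>. Im w = - t"
proof -
  interpret curve_setting c "d/2" \<beta> using assms by unfold_locales auto
  define t1 where "t1 = t/2"
  have t1: "0 < t1" "t1 < t" unfolding t1_def using t by auto
  obtain R where R: "\<And>s t'. t1 \<le> t' \<Longrightarrow> s > 0 \<Longrightarrow> curve c (d/2) \<beta> s t' = 0 \<Longrightarrow> s \<le> R"
    using curve_witness_bounded[OF t1(1)] by blast
  define K where "K = Gamma_beta c d \<beta> \<inter> cball 0 (sqrt R + depth_bound) \<inter> {w. Im w \<le> - t1}"
  have closed: "closed ((\<lambda>w. - Im w) ` K)"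
    unfolding K_def Gamma_beta_def by (intro closed_neg_Im_image) simp
  have sub: "depths c (d/2) \<beta> \<inter> {t1<..} \<subseteq> (\<lambda>w. - Im w) ` K"
  proof
    fix t' assume "t' \<in> depths c (d/2) \<beta> \<inter> {t1<..}"
    then have t': "t' \<in> depths c (d/2) \<beta>" "t1 < t'" by auto
    obtain s where s: "s > 0" "curve c (d/2) \<beta> s t' = 0"
      using t'(1) unfolding depths_def by blast
    define w where "w = Complex (sqrt s) (- t')"
    have w: "Re w = sqrt s" "Im w = - t'" unfolding w_def by simp_all
    have "w \<in> Gamma_beta c d \<beta>" unfolding w_def using s by (rule Gamma_beta_point)
    moreover have "norm w \<le> sqrt R + depth_bound"
    proof -
      have "norm w \<le> \<bar>Re w\<bar> + \<bar>Im w\<bar>" by (rule cmod_le)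
      moreover have "sqrt s \<le> sqrt R" using R[of t' s] t' s by simp
      moreover have "t' < depth_bound" using depths_less_bound[OF t'(1)] .
      moreover have "\<bar>Re w\<bar> + \<bar>Im w\<bar> = sqrt s + t'" using w s t' t1 by simp
      ultimately show ?thesis by linarith
    qed
    moreover have "Im w \<le> - t1" using w(2) t'(2) by simp
    ultimately have "w \<in> K" unfolding K_def by (simp add: dist_norm)
    moreover have "t' = - Im w" using w(2) by simp
    ultimately show "t' \<in> (\<lambda>w. - Im w) ` K" by (rule rev_image_eqI)
  qed
  have "t \<in> {t1<..} \<inter> closure (depths c (d/2) \<beta>)" using t t1 by simp
  then have "t \<in> closure (depths c (d/2) \<beta> \<inter> {t1<..})"
    using open_Int_closure_subset[of "{t1<..}" "depths c (d/2) \<beta>"] by (auto simp: Int_commute)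
  then have "t \<in> (\<lambda>w. - Im w) ` K" using closure_minimal[OF sub closed] by blast
  then obtain w where w: "w \<in> K" "t = - Im w" by blast
  then have "w \<in> Gamma_beta c d \<beta>" unfolding K_def by simp
  then show ?thesis using w(2) by (intro bexI[of _ w]) simp_all
qed

section \<open>The threshold\<close>

lemma phi_strict_mono_in_h:
  assumes cp: "c > 0" and t: "sqrt c \<le> t" "t \<le> h1" and h: "sqrt c < h1" "h1 < h2"
  shows "phi c h1 t < phi c h2 t"
proof -
  define K where "K = - kappa c h1 t"
  define D where "D = h2 - h1"
  define A1 where "A1 = h1*t - c"
  define A2 where "A2 = h2*t - c"
  have sc: "sqrt c > 0" "sqrt c * sqrt c = c" using cp by simp_all
  have "sqrt c * sqrt c < h1 * t" using sc t h by (intro mult_less_le_imp_less) auto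
  then have A1: "A1 > 0" "2*h1*t > 2*c" unfolding A1_def using sc by simp_all
  have "c \<le> t^2" using power_mono[OF t(1), of 2] sc by (simp add: power2_eq_square)
  have "t > 0" using sc t by linarith
  have Dp: "D > 0" unfolding D_def using h by simp
  have A2: "A2 = A1 + t*D" unfolding A2_def A1_def D_def by algebra
  then have "A2 > 0" using A1 \<open>t > 0\<close> Dp by (simp add: add_pos_pos)
  have "t*t \<le> t*h1" using t \<open>t > 0\<close> by (intro mult_left_mono) auto
  moreover have "c < t*h1" using \<open>sqrt c * sqrt c < h1 * t\<close> sc by (simp add: mult.commute)
  ultimately have Kp: "K > 0" unfolding K_def kappa_def by (simp add: power2_eq_square algebra_simps)
  have "kappa c h2 t = -(K + 2*t*D)" unfolding K_def D_def kappa_def by algebra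
  then have key: "(kappa c h2 t)^2*A1 - (kappa c h1 t)^2*A2 = t*D*(K*(4*A1 - K) + 4*t*D*A1)"
    unfolding A2 unfolding K_def by algebra
  have "4*A1 - K = 2*h1*t + t^2 - 3*c" unfolding A1_def K_def kappa_def by algebra
  then have "4*A1 - K > 0" using A1 \<open>c \<le> t^2\<close> by simp
  then have "K*(4*A1 - K) + 4*t*D*A1 > 0" using Kp \<open>t > 0\<close> Dp A1 by (simp add: add_pos_pos)
  then have "t*D*(K*(4*A1 - K) + 4*t*D*A1) > 0" using \<open>t > 0\<close> Dp by simp
  then have "(kappa c h1 t)^2*A2 < (kappa c h2 t)^2*A1" using key by linarith
  then show ?thesis unfolding phi_def A1_def[symmetric] A2_def[symmetric] using A1 \<open>A2 > 0\<close>
    by (simp add: divide_less_eq less_divide_eq mult.commute)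
qed

lemma sq_le_if_double_sqrt_le: "c \<ge> 0 \<Longrightarrow> 2 * sqrt c \<le> h \<Longrightarrow> 4*c \<le> h^2"
  using power_mono[of "2 * sqrt c" h 2] by (simp add: power_mult_distrib)

lemma phi_max_strict_mono:
  assumes cp: "c > 0" and h: "2 * sqrt c \<le> h1" "h1 < h2" shows "phi_max c h1 < phi_max c h2"
proof -
  have sc: "sqrt c > 0" using cp by simp
  have c4: "4*c \<le> h1^2" "4*c \<le> h2^2" using sq_le_if_double_sqrt_le cp h by auto
  have "h2 > 0" using h sc by linarith
  interpret h2: curve_setting_c_less c h2 1 using cp \<open>h2 > 0\<close> c4 by unfold_locales auto
  define t where "t = rho_root2 c h1"
  have t: "sqrt c \<le> t" "t \<le> h1" "0 < t"
    using rho_roots_bounds[OF _ _ c4(1)] h sc unfolding t_def by auto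
  have "phi c h1 t < phi c h2 t" using phi_strict_mono_in_h[OF cp t(1,2)] h sc by simp
  also have "\<dots> \<le> phi_max c h2" using h2.phi_le_phi_max[OF c4(2) t(3,1)] t h h2.h_less_kappa_root by simp
  finally show ?thesis unfolding phi_max_def t_def .
qed

lemma phi_max_double_sqrt:
  assumes cp: "c > 0" shows "phi_max c (2 * sqrt c) = 4*c"
proof -
  have sc: "sqrt c > 0" "sqrt c * sqrt c = c" using cp by simp_all
  have "rho_root2 c (2 * sqrt c) = 12*c / (12 * sqrt c)"
    unfolding rho_root2_def using cp by (simp add: power_mult_distrib)
  also have "\<dots> = sqrt c" using sc by (simp add: field_simps)
  finally have r: "rho_root2 c (2 * sqrt c) = sqrt c" .
  have "2 * sqrt c * sqrt c - c = c" using sc by (simp add: mult.assoc)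
  then have "2 * sqrt c * sqrt c - c \<noteq> 0" using cp by linarith
  then have "phi_max c (2 * sqrt c) = parab (2 * sqrt c) (sqrt c)"
    unfolding phi_max_def r using cp by (intro phi_sqrt_eq_parab) auto
  also have "\<dots> = 4*c" unfolding parab_def using sc by (simp add: algebra_simps)
  finally show ?thesis .
qed

lemma continuous_on_phi_max:
  assumes cp: "c > 0" shows "continuous_on {2 * sqrt c..} (phi_max c)"
proof -
  have hpos: "h > 0" if "h \<in> {2 * sqrt c..}" for h
  proof -
    have "2 * sqrt c \<le> h" using that by simp
    moreover have "sqrt c > 0" using cp by simp
    ultimately show ?thesis by linarith
  qed
  have pos: "h * rho_root2 c h - c > 0" if "h \<in> {2 * sqrt c..}" for h
  proof -
    have h: "h > 0" "4*c \<le> h^2" using that hpos cp sq_le_if_double_sqrt_le[of c h] by auto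
    interpret curve_setting_c_less c h 1 using cp h by unfold_locales auto
    show ?thesis using beyond_sqrt_c(1) rho_roots_bounds[OF h(1) c0 h(2)] by simp
  qed
  have "phi_max c = (\<lambda>h. ((rho_root2 c h)^2 - 2*h*rho_root2 c h + c)^2 / (h * rho_root2 c h - c))"
    unfolding phi_max_def phi_def kappa_def by auto
  moreover have "continuous_on {2 * sqrt c..} (rho_root2 c)"
    unfolding rho_root2_def using hpos cp by (auto intro!: continuous_intros)
  moreover have "\<forall>x\<in>{2 * sqrt c..}. x * rho_root2 c x - c \<noteq> 0" using pos by force
  ultimately show ?thesis by (auto intro!: continuous_intros)
qed

lemma phi_max_zero: "h > 0 \<Longrightarrow> phi_max 0 h = 32*h^2/27"
proof -
  assume h: "h > 0"
  have "sqrt ((h^2 - 0)*(h^2 - 4*0)) = sqrt (h^2 * h^2)" by simp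
  also have "\<dots> = sqrt (h^2) * sqrt (h^2)" by (rule real_sqrt_mult)
  also have "\<dots> = h^2" using h by (simp add: power2_eq_square)
  finally have "sqrt ((h^2 - 0)*(h^2 - 4*0)) = h^2" .
  then have r: "rho_root2 0 h = 2*h/3" unfolding rho_root2_def using h by (simp add: field_simps power2_eq_square)
  have k: "kappa 0 h (2*h/3) = -8*h^2/9" unfolding kappa_def by (simp add: field_simps power2_eq_square)
  show ?thesis unfolding phi_max_def phi_def r k using h by (simp add: field_simps power2_eq_square)
qed

lemma phi_max_level:
  assumes cp: "c > 0" and b: "4*c \<le> \<beta>"
  obtains hs where "2 * sqrt c \<le> hs" "hs \<le> sqrt \<beta>" "phi_max c hs = \<beta>"
proof -
  have sb: "2 * sqrt c \<le> sqrt \<beta>" using real_sqrt_le_mono[OF b] by (simp add: real_sqrt_mult)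
  have "\<beta> > 0" using cp b by simp
  then interpret B: curve_setting_c_less c "sqrt \<beta>" 1 using cp b by unfold_locales auto
  have "\<beta> \<le> phi_max c (sqrt \<beta>)" using B.sq_le_phi_max b \<open>\<beta> > 0\<close> by simp
  moreover have "phi_max c (2 * sqrt c) \<le> \<beta>" using phi_max_double_sqrt[OF cp] b by simp
  moreover have "continuous_on {2 * sqrt c..sqrt \<beta>} (phi_max c)"
    using continuous_on_phi_max[OF cp] by (rule continuous_on_subset) auto
  ultimately show ?thesis using IVT'[of "phi_max c" "2 * sqrt c" \<beta> "sqrt \<beta>"] sb that by auto
qed

lemma phi_max_less_iff:
  assumes cp: "c > 0" and h: "2 * sqrt c \<le> hs" "2 * sqrt c \<le> h"
  shows "phi_max c hs < phi_max c h \<longleftrightarrow> hs < h"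
  using phi_max_strict_mono[OF cp h(1)] phi_max_strict_mono[OF cp h(2)]
  by (metis not_less_iff_gr_or_eq order.asym)

lemma d2_eq_level:
  assumes cp: "c > 0" and b: "4*c \<le> \<beta>"
    and hs: "2 * sqrt c \<le> hs" "hs \<le> sqrt \<beta>" "phi_max c hs = \<beta>"
  shows "d2 c \<beta> = ereal (2*hs)"
proof -
  have sc: "sqrt c > 0" using cp by simp
  have "\<beta> > 0" using cp b by simp
  have root: "disc_q c \<beta> (2*hs) = 0"
  proof -
    have "hs > 0" using hs(1) sc by linarith
    interpret B: curve_setting_c_less c hs \<beta>
      using cp \<open>hs > 0\<close> \<open>\<beta> > 0\<close> sq_le_if_double_sqrt_le[of c hs] hs(1) by unfold_locales auto
    show ?thesis using B.disc_q_zero_if_phi_max sq_le_if_double_sqrt_le[of c hs] cp hs by simp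
  qed
  have unique: "x = 2*hs" if x: "2 * sqrt c < x" "x \<le> 2 * sqrt \<beta>" "disc_q c \<beta> x = 0" for x
  proof -
    define h where "h = x/2"
    have h: "sqrt c < h" "h \<le> sqrt \<beta>" "disc_q c \<beta> (2*h) = 0" using x unfolding h_def by auto
    have "c < h^2" using power_strict_mono[OF h(1), of 2] sc by simp
    moreover have "h^2 \<le> \<beta>" using power_mono[OF h(2), of 2] h(1) sc \<open>\<beta> > 0\<close> by simp
    moreover have "h > 0" using h sc by linarith
    ultimately interpret B: curve_setting_c_less c h \<beta> using cp \<open>\<beta> > 0\<close> by unfold_locales auto
    have c4: "4*c \<le> h^2" and M: "phi_max c h = \<beta>"
      using B.phi_max_if_disc_q_zero[OF cp \<open>h^2 \<le> \<beta>\<close> h(3)] by auto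
    have "2 * sqrt c \<le> h" using real_sqrt_le_mono[OF c4] B.h0 by (simp add: real_sqrt_mult)
    then have "h = hs" using phi_max_less_iff[OF cp hs(1)] phi_max_less_iff[OF cp _ hs(1)] M hs(3)
      by (metis less_irrefl not_less_iff_gr_or_eq)
    then show ?thesis unfolding h_def by simp
  qed
  have "2 * sqrt c < 2*hs" "2*hs \<le> 2 * sqrt \<beta>" using hs(1,2) sc by linarith+
  then have "(THE x. 2 * sqrt c < x \<and> x \<le> 2 * sqrt \<beta> \<and> disc_q c \<beta> x = 0) = 2*hs"
    using root unique by (intro the_equality) auto
  then show ?thesis unfolding d2_def using cp b by simp
qed

lemma peak_less_iff_large_beta:
  assumes cp: "c > 0" and b: "4*c \<le> \<beta>" and h0: "h > 0"
  shows "\<beta> < peak c h \<longleftrightarrow> ereal (2*h) > min (ereal (2 * sqrt \<beta>)) (d2 c \<beta>)"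
proof -
  obtain hs where hs: "2 * sqrt c \<le> hs" "hs \<le> sqrt \<beta>" "phi_max c hs = \<beta>"
    using phi_max_level[OF cp b] by blast
  have "\<beta> < peak c h \<longleftrightarrow> hs < h"
  proof (cases "2 * sqrt c \<le> h")
    case True
    then show ?thesis using phi_max_less_iff[OF cp hs(1) True] hs(3) sq_le_if_double_sqrt_le cp
      unfolding peak_def by simp
  next
    case False
    then have "h^2 < (2 * sqrt c)^2" using h0 by (intro power_strict_mono) auto
    then have "h^2 < 4*c" using cp by (simp add: power_mult_distrib)
    then show ?thesis using False hs b unfolding peak_def by auto
  qed
  then show ?thesis using d2_eq_level[OF cp b hs] hs(2) by simp
qed

lemma peak_less_iff:
  assumes c0: "c \<ge> 0" and d0: "d > 0" and b0: "\<beta> > 0"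
  shows "\<beta> < peak c (d/2) \<longleftrightarrow> ereal d > min (ereal (2 * sqrt \<beta>)) (d2 c \<beta>)"
proof -
  define h where "h = d/2"
  have h0: "h > 0" and d: "d = 2*h" unfolding h_def using d0 by auto
  consider "c = 0" | "c > 0" "\<beta> < 4*c" | "c > 0" "4*c \<le> \<beta>" using c0 by linarith
  then have "\<beta> < peak c h \<longleftrightarrow> ereal d > min (ereal (2 * sqrt \<beta>)) (d2 c \<beta>)"
  proof cases
    case 1
    have "sqrt (27*\<beta>/8) \<le> sqrt (4*\<beta>)" using b0 by (intro real_sqrt_le_mono) simp
    then have m: "min (ereal (2 * sqrt \<beta>)) (d2 c \<beta>) = ereal (sqrt (27*\<beta>/8))"
      unfolding d2_def using 1 by (simp add: real_sqrt_mult)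
    have s: "sqrt (27*\<beta>/8) < d \<longleftrightarrow> \<beta> < 32*h^2/27"
      using sqrt_less_iff[of d] d0 unfolding d by (simp add: power_mult_distrib field_simps)
    have p: "peak c h = 32*h^2/27" unfolding peak_def using 1 phi_max_zero[OF h0] by simp
    show ?thesis unfolding p m using s by simp
  next
    case 2
    have "\<beta> < peak c h \<longleftrightarrow> \<beta> < h^2"
    proof (cases "4*c \<le> h^2")
      case True
      interpret curve_setting_c_less c h 1 using 2 True h0 by unfold_locales auto
      show ?thesis using sq_le_phi_max[OF True] True 2 unfolding peak_def by simp
    qed (simp add: peak_def)
    moreover have "2 * sqrt \<beta> < d \<longleftrightarrow> \<beta> < h^2" using sqrt_less_iff[of h \<beta>] h0 unfolding d by simp
    ultimately show ?thesis unfolding d2_def using 2 by simp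
  next
    case 3
    then show ?thesis using peak_less_iff_large_beta[OF _ _ h0] unfolding d by simp
  qed
  then show ?thesis unfolding h_def .
qed

lemma maximal_strip_Gamma_beta_iff:
  assumes "c \<ge> 0" "d > 0" "\<beta> > 0"
  shows "maximal_strip (Gamma_beta c d \<beta>) s0 s1 \<longleftrightarrow> gap (closure (depths c (d/2) \<beta>)) (- s1) (- s0)"
proof -
  interpret curve_setting c "d/2" \<beta> using assms by unfold_locales auto
  obtain e where e: "e > 0" "{0<..<e} \<subseteq> depths c (d/2) \<beta>" using depths_near_zero by blast
  have "closure (depths c (d/2) \<beta>) \<subseteq> {0..}" using depths_pos by (intro closure_minimal) auto
  then show ?thesis
    using Im_Gamma_beta[OF assms] Gamma_beta_attains_depth[OF assms] e closure_subset
    by (intro maximal_strip_iff_gap) blast+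
qed

theorem proposition3p16:
  fixes c d \<beta> :: real
  assumes "c \<ge> 0" and "d > 0" and "\<beta> > 0"
  shows "((\<exists>!s. maximal_strip (Gamma_beta c d \<beta>) (fst s) (snd s))
            \<longleftrightarrow> ereal d > min (ereal (2 * sqrt \<beta>)) (d2 c \<beta>))
       \<and> (ereal d \<le> min (ereal (2 * sqrt \<beta>)) (d2 c \<beta>)
            \<longrightarrow> \<not> (\<exists>s0 s1. maximal_strip (Gamma_beta c d \<beta>) s0 s1))"
proof -
  interpret curve_setting c "d/2" \<beta> using assms by unfold_locales auto
  note strip_iff_gap = maximal_strip_Gamma_beta_iff[OF assms]
  note threshold = peak_less_iff[OF assms]
  show ?thesis
  proof (cases "\<beta> < peak c (d/2)")
    case True
    then have "\<exists>!s. maximal_strip (Gamma_beta c d \<beta>) (fst s) (snd s)"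
      using depths_shape(2) ex1_maximal_strip_iff_ex1_gap[OF strip_iff_gap] by blast
    moreover have "ereal d > min (ereal (2 * sqrt \<beta>)) (d2 c \<beta>)" using threshold True by blast
    ultimately show ?thesis using not_le by blast
  next
    case False
    then have "\<not> (\<exists>s0 s1. maximal_strip (Gamma_beta c d \<beta>) s0 s1)"
      using depths_shape(1) no_gap_if_convex_in strip_iff_gap by (metis not_less)
    moreover have "ereal d \<le> min (ereal (2 * sqrt \<beta>)) (d2 c \<beta>)" using threshold False not_less by blast
    moreover have "\<not> (\<exists>!s. maximal_strip (Gamma_beta c d \<beta>) (fst s) (snd s))"
      using calculation(1) by blast
    ultimately show ?thesis using leD by blast
  qed
qed

end
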